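(* The following are equivalent: (i) there exists a decomposition of $V$ which is split with respect to the orderings $E_0,\ldots,E_d$ and $E^*_0,\ldots,E^*_d$; (ii) for all $0\le i,j\le d$: $E^*_iAE^*_j=0$ if $i-j>1$ and $E^*_iAE^*_j\ne0$ if $i-j=1$; and $E_iA^*E_j=0$ if $j-i>1$ and $E_iA^*E_j\ne0$ if $j-i=1$.
   Context: Let $\mathbb K$ be a field, $d\ge 0$ an integer, and $\mathcal A$ a $\mathbb K$-algebra isomorphic to $\mathrm{Mat}_{d+1}(\mathbb K)$, with identity $I$. An element of $\mathcal A$ is multiplicity-free if it has $d+1$ mutually distinct eigenvalues, all in $\mathbb K$; for such $A$ with eigenvalues $\theta_0,\ldots,\theta_d$, the primitive idempotent associated with $\theta_i$ is $E_i=\prod_{j\ne i}(A-\theta_jI)/(\theta_i-\theta_j)$. Standing setup: $A,A^*$ are multiplicity-free elements of $\mathcal A$ ($A^*$ is just a name, not an adjoint); $E_0,\ldots,E_d$ is an ordering of the primitive idempotents of $A$ and $\theta_i$ is the eigenvalue of $A$ for $E_i$; $E^*_0,\ldots,E^*_d$ is an ordering of the primitive idempotents of $A^*$ and $\theta^*_i$ is the eigenvalue of $A^*$ for $E^*_i$; $V$ is an irreducible left $\mathcal A$-module. A decomposition of $V$ is a sequence $U_0,\ldots,U_d$ of 1-dimensional subspaces with $V=U_0+\cdots+U_d$ (direct sum). Such a decomposition is split (with respect to the orderings $E_0,\ldots,E_d$ and $E^*_0,\ldots,E^*_d$) if $(A-\theta_iI)U_i=U_{i+1}$ for $0\le i\le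 d-1$, $(A-\theta_dI)U_d=0$, $(A^*-\theta^*_iI)U_i=U_{i-1}$ for $1\le i\le d$, and $(A^*-\theta^*_0I)U_0=0$. *)

theory Defs
  imports "Jordan_Normal_Form.Char_Poly"
begin

text \<open>We realise the algebra isomorphic to Mat_{d+1}(K) as the algebra of (d+1)x(d+1)
matrices over K, and its (unique up to isomorphism) irreducible module V as the column
vectors K^{d+1} = carrier_vec (d+1).\<close>

definition eigenvalue_ordering :: "nat \<Rightarrow> 'a::field mat \<Rightarrow> (nat \<Rightarrow> 'a) \<Rightarrow> bool" where
  "eigenvalue_ordering d A th \<longleftrightarrow>
     A \<in> carrier_mat (Suc d) (Suc d) \<and> inj_on th {..d} \<and> (\<forall>i\<le>d. eigenvalue A (th i))"

text \<open>Primitive idempotent E_i = prod_{j ne i} (A - theta_j I)/(theta_i - theta_j).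
(The factors commute, so the order of the product is irrelevant.)\<close>
definition prim_idem :: "nat \<Rightarrow> 'a::field mat \<Rightarrow> (nat \<Rightarrow> 'a) \<Rightarrow> nat \<Rightarrow> 'a mat" where
  "prim_idem d A th i =
     foldr (\<lambda>j M. ((1 / (th i - th j)) \<cdot>\<^sub>m (A - th j \<cdot>\<^sub>m 1\<^sub>m (Suc d))) * M)
       (filter (\<lambda>j. j \<noteq> i) [0..<Suc d]) (1\<^sub>m (Suc d))"

definition one_dim_subspace :: "nat \<Rightarrow> 'a::field vec set \<Rightarrow> bool" where
  "one_dim_subspace n U \<longleftrightarrow> (\<exists>u\<in>carrier_vec n. u \<noteq> 0\<^sub>v n \<and> U = {c \<cdot>\<^sub>v u | c. True})"

definition decomposition :: "nat \<Rightarrow> (nat \<Rightarrow> 'a::field vec set) \<Rightarrow> bool" where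
  "decomposition d U \<longleftrightarrow>
     (\<forall>i\<le>d. one_dim_subspace (Suc d) (U i)) \<and>
     (\<forall>v\<in>carrier_vec (Suc d). \<exists>f. (\<forall>i\<le>d. f i \<in> U i) \<and>
         v = finsum_vec TYPE('a) (Suc d) f {..d}) \<and>
     (\<forall>f. (\<forall>i\<le>d. f i \<in> U i) \<and> finsum_vec TYPE('a) (Suc d) f {..d} = 0\<^sub>v (Suc d)
         \<longrightarrow> (\<forall>i\<le>d. f i = 0\<^sub>v (Suc d)))"

definition split_decomposition ::
  "nat \<Rightarrow> 'a::field mat \<Rightarrow> (nat \<Rightarrow> 'a) \<Rightarrow> 'a mat \<Rightarrow> (nat \<Rightarrow> 'a) \<Rightarrow> (nat \<Rightarrow> 'a vec set) \<Rightarrow> bool" where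
  "split_decomposition d A th As ths U \<longleftrightarrow>
     decomposition d U \<and>
     (\<forall>i<d. (\<lambda>x. (A - th i \<cdot>\<^sub>m 1\<^sub>m (Suc d)) *\<^sub>v x) ` U i = U (Suc i)) \<and>
     (\<lambda>x. (A - th d \<cdot>\<^sub>m 1\<^sub>m (Suc d)) *\<^sub>v x) ` U d = {0\<^sub>v (Suc d)} \<and>
     (\<forall>i. 1 \<le> i \<and> i \<le> d \<longrightarrow> (\<lambda>x. (As - ths i \<cdot>\<^sub>m 1\<^sub>m (Suc d)) *\<^sub>v x) ` U i = U (i - 1)) \<and>
     (\<lambda>x. (As - ths 0 \<cdot>\<^sub>m 1\<^sub>m (Suc d)) *\<^sub>v x) ` U 0 = {0\<^sub>v (Suc d)}"

end

theory Submission
  imports Defs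
begin

text \<open>
  Call a basis \<open>u\<^sub>0, \<dots>, u\<^sub>d\<close> adapted to a family of rank-one idempotents \<open>G\<^sub>0, \<dots>, G\<^sub>d\<close> if
  \<open>u\<^sub>k \<in> G\<^sub>0V + \<dots> + G\<^sub>kV\<close> with \<open>G\<^sub>ku\<^sub>k \<noteq> 0\<close>; then \<open>span(u\<^sub>0, \<dots>, u\<^sub>j) = G\<^sub>0V + \<dots> + G\<^sub>jV\<close>.
  If \<open>A\<^sup>*\<close> lowers a basis, \<open>(A\<^sup>* - \<theta>\<^sup>*\<^sub>k)u\<^sub>k \<in> span u\<^sub>k\<^sub>-\<^sub>1\<close>, then the identity
  \<open>E\<^sup>*\<^sub>l(A\<^sup>* - \<theta>\<^sup>*\<^sub>k)u\<^sub>k = (\<theta>\<^sup>*\<^sub>l - \<theta>\<^sup>*\<^sub>k)E\<^sup>*\<^sub>lu\<^sub>k\<close> forces the basis to be adapted to the \<open>E\<^sup>*\<^sub>i\<close>.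
  If moreover \<open>A\<close> raises it, \<open>(A - \<theta>\<^sub>k)u\<^sub>k \<in> span u\<^sub>k\<^sub>+\<^sub>1 \<setminus> 0\<close>, then \<open>A\<close> maps
  \<open>span(u\<^sub>0, \<dots>, u\<^sub>j)\<close> into \<open>span(u\<^sub>0, \<dots>, u\<^sub>j\<^sub>+\<^sub>1)\<close> and sends \<open>u\<^sub>j\<close> to a vector with nonzero
  \<open>u\<^sub>j\<^sub>+\<^sub>1\<close>-coordinate; read through the flag of the \<open>E\<^sup>*\<^sub>i\<close>, this is exactly the pattern of the
  products \<open>E\<^sup>*\<^sub>iAE\<^sup>*\<^sub>j\<close>. A split basis is split for the reversed data as well (swap \<open>A\<close>
  and \<open>A\<^sup>*\<close>, reverse all indices), which yields the pattern of the \<open>E\<^sub>iA\<^sup>*E\<^sub>j\<close>.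

  Conversely, start from \<open>0 \<noteq> v \<in> E\<^sup>*\<^sub>0V\<close> and put \<open>u\<^sub>k = (A - \<theta>\<^sub>k\<^sub>-\<^sub>1)\<cdots>(A - \<theta>\<^sub>0)v\<close>. The
  conditions on \<open>E\<^sup>*\<^sub>iAE\<^sup>*\<^sub>j\<close> show inductively that this basis is adapted to the \<open>E\<^sup>*\<^sub>i\<close>, while
  \<open>E\<^sub>lu\<^sub>k = (\<theta>\<^sub>l - \<theta>\<^sub>k\<^sub>-\<^sub>1)\<cdots>(\<theta>\<^sub>l - \<theta>\<^sub>0)E\<^sub>lv\<close> shows that it is adapted to the \<open>E\<^sub>i\<close> in reverse
  order. The vector \<open>(A\<^sup>* - \<theta>\<^sup>*\<^sub>i)u\<^sub>i\<close> then lies in both \<open>E\<^sup>*\<^sub>0V + \<dots> + E\<^sup>*\<^sub>i\<^sub>-\<^sub>1V\<close> and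
  \<open>E\<^sub>i\<^sub>-\<^sub>1V + \<dots> + E\<^sub>dV\<close>, whose intersection is the line through \<open>u\<^sub>i\<^sub>-\<^sub>1\<close>, and its
  \<open>E\<^sub>i\<^sub>-\<^sub>1\<close>-component \<open>E\<^sub>i\<^sub>-\<^sub>1A\<^sup>*E\<^sub>iu\<^sub>i\<close> is nonzero because
  \<open>E\<^sub>i\<^sub>-\<^sub>1A\<^sup>*E\<^sub>i \<noteq> 0\<close> and \<open>E\<^sub>i\<close> has rank one.
\<close>

definition lin_comb :: "nat \<Rightarrow> (nat \<Rightarrow> 'a::comm_ring_1 vec) \<Rightarrow> (nat \<Rightarrow> 'a) \<Rightarrow> 'a vec" where
  "lin_comb d u c = vec (Suc d) (\<lambda>i. \<Sum>k\<le>d. c k * u k $ i)"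

definition is_basis :: "nat \<Rightarrow> (nat \<Rightarrow> 'a::comm_ring_1 vec) \<Rightarrow> bool" where
  "is_basis d u \<longleftrightarrow> (\<forall>k\<le>d. u k \<in> carrier_vec (Suc d)) \<and>
     (\<forall>c. lin_comb d u c = 0\<^sub>v (Suc d) \<longrightarrow> (\<forall>k\<le>d. c k = 0)) \<and>
     (\<forall>w\<in>carrier_vec (Suc d). \<exists>c. w = lin_comb d u c)"

lemma lin_comb_carrier [simp]: "lin_comb d u c \<in> carrier_vec (Suc d)"
  by (simp add: lin_comb_def)

lemma lin_comb_cong:
  "(\<And>k. k \<le> d \<Longrightarrow> u k = v k) \<Longrightarrow> (\<And>k. k \<le> d \<Longrightarrow> c k = e k) \<Longrightarrow> lin_comb d u c = lin_comb d v e"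
  unfolding lin_comb_def by (intro arg_cong[where f="vec (Suc d)"] ext sum.cong) auto

lemma mult_mat_vec_lin_comb:
  assumes B: "B \<in> carrier_mat (Suc d) (Suc d)" and u: "\<And>k. k \<le> d \<Longrightarrow> u k \<in> carrier_vec (Suc d)"
  shows "B *\<^sub>v lin_comb d u c = lin_comb d (\<lambda>k. B *\<^sub>v u k) c"
proof (rule eq_vecI)
  fix i assume "i < dim_vec (lin_comb d (\<lambda>k. B *\<^sub>v u k) c)"
  hence i: "i < Suc d" by (simp add: lin_comb_def)
  have row: "(B *\<^sub>v u k) $ i = (\<Sum>j<Suc d. B $$ (i,j) * u k $ j)" if "k \<le> d" for k
    using B i u[OF that] by (simp add: scalar_prod_def lessThan_atLeast0)
  have "(B *\<^sub>v lin_comb d u c) $ i = (\<Sum>j<Suc d. B $$ (i,j) * (\<Sum>k\<le>d. c k * u k $ j))"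
    using B i by (simp add: lin_comb_def scalar_prod_def lessThan_atLeast0)
  also have "\<dots> = (\<Sum>j<Suc d. \<Sum>k\<le>d. c k * (B $$ (i,j) * u k $ j))"
    by (simp add: sum_distrib_left algebra_simps)
  also have "\<dots> = (\<Sum>k\<le>d. c k * (\<Sum>j<Suc d. B $$ (i,j) * u k $ j))"
    by (subst sum.swap) (simp only: sum_distrib_left)
  also have "\<dots> = lin_comb d (\<lambda>k. B *\<^sub>v u k) c $ i"
    using i row by (simp add: lin_comb_def)
  finally show "(B *\<^sub>v lin_comb d u c) $ i = lin_comb d (\<lambda>k. B *\<^sub>v u k) c $ i" .
qed (use B in \<open>simp add: lin_comb_def\<close>)

lemma lin_comb_single:
  assumes j: "j \<le> d" and uj: "u j \<in> carrier_vec (Suc d)"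
    and others: "\<And>k. k \<le> d \<Longrightarrow> k \<noteq> j \<Longrightarrow> c k = 0 \<or> u k = 0\<^sub>v (Suc d)"
  shows "lin_comb d u c = c j \<cdot>\<^sub>v u j"
proof (rule eq_vecI)
  fix i assume "i < dim_vec (c j \<cdot>\<^sub>v u j)"
  hence i: "i < Suc d" using uj by simp
  have "(\<Sum>k\<le>d. c k * u k $ i) = (\<Sum>k\<le>d. if k = j then c j * u j $ i else 0)"
    using others i by (intro sum.cong refl) (metis atMost_iff index_zero_vec(1) mult_zero_left mult_zero_right)
  thus "lin_comb d u c $ i = (c j \<cdot>\<^sub>v u j) $ i" using i uj j by (simp add: lin_comb_def)
qed (use uj in \<open>simp add: lin_comb_def\<close>)

lemma lin_comb_eq_zero:
  assumes "\<And>k. k \<le> d \<Longrightarrow> c k = 0 \<or> u k = 0\<^sub>v (Suc d)"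
  shows "lin_comb d u c = 0\<^sub>v (Suc d)"
proof (rule eq_vecI)
  fix i assume "i < dim_vec (0\<^sub>v (Suc d) :: 'a vec)"
  hence "i < Suc d" by simp
  moreover have "(\<Sum>k\<le>d. c k * u k $ i) = 0" if "i < Suc d"
    using assms that by (intro sum.neutral) (metis atMost_iff index_zero_vec(1) mult_zero_left mult_zero_right)
  ultimately show "lin_comb d u c $ i = 0\<^sub>v (Suc d) $ i" by (simp add: lin_comb_def)
qed (simp add: lin_comb_def)

lemma mult_vec_lin_comb_top_coeff:
  assumes u: "\<And>k. k \<le> d \<Longrightarrow> u k \<in> carrier_vec (Suc d)" and B: "B \<in> carrier_mat (Suc d) (Suc d)"
    and c0: "\<And>k. j < k \<Longrightarrow> k \<le> d \<Longrightarrow> c k = 0" and j: "j \<le> d"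
    and below: "\<And>k. k < j \<Longrightarrow> B *\<^sub>v u k = 0\<^sub>v (Suc d)"
  shows "B *\<^sub>v lin_comb d u c = c j \<cdot>\<^sub>v (B *\<^sub>v u j)"
proof -
  have "B *\<^sub>v lin_comb d u c = lin_comb d (\<lambda>k. B *\<^sub>v u k) c" by (rule mult_mat_vec_lin_comb[OF B u])
  also have "\<dots> = c j \<cdot>\<^sub>v (B *\<^sub>v u j)"
  proof (rule lin_comb_single[OF j])
    show "B *\<^sub>v u j \<in> carrier_vec (Suc d)" using B u[OF j] by simp
    fix k assume "k \<le> d" "k \<noteq> j"
    thus "c k = 0 \<or> B *\<^sub>v u k = 0\<^sub>v (Suc d)" using c0 below by (cases "j < k") auto
  qed
  finally show ?thesis .
qed

lemma lin_comb_rev: "lin_comb d (\<lambda>k. u (d - k)) c = lin_comb d u (\<lambda>k. c (d - k))"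
proof -
  have "(\<Sum>k\<le>d. c k * u (d - k) $ i) = (\<Sum>k\<le>d. c (d - k) * u k $ i)" for i
    by (rule sum.reindex_bij_witness[where i="\<lambda>k. d - k" and j="\<lambda>k. d - k"]) auto
  thus ?thesis unfolding lin_comb_def by simp
qed

lemma lin_comb_smult_vectors:
  assumes u: "\<And>k. k \<le> d \<Longrightarrow> u k \<in> carrier_vec (Suc d)"
  shows "lin_comb d (\<lambda>k. c k \<cdot>\<^sub>v u k) (\<lambda>_. 1) = lin_comb d u c"
proof (rule eq_vecI)
  fix i assume "i < dim_vec (lin_comb d u c)"
  hence "i < Suc d" by (simp add: lin_comb_def)
  moreover have "(\<Sum>k\<le>d. 1 * (c k \<cdot>\<^sub>v u k) $ i) = (\<Sum>k\<le>d. c k * u k $ i)" if "i < Suc d"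
    using u that by (intro sum.cong refl) (metis atMost_iff carrier_vecD index_smult_vec(1) mult_1)
  ultimately show "lin_comb d (\<lambda>k. c k \<cdot>\<^sub>v u k) (\<lambda>_. 1) $ i = lin_comb d u c $ i"
    by (simp add: lin_comb_def)
qed (simp add: lin_comb_def)

lemma finsum_vec_eq_lin_comb:
  assumes u: "\<And>k. k \<le> d \<Longrightarrow> u k \<in> carrier_vec (Suc d)"
  shows "finsum_vec TYPE('a::field) (Suc d) (\<lambda>k. c k \<cdot>\<^sub>v u k) {..d} = lin_comb d u c"
proof (rule eq_vecI)
  have Pi: "(\<lambda>k. c k \<cdot>\<^sub>v u k) \<in> {..d} \<rightarrow> carrier_vec (Suc d)" using u by auto
  show "dim_vec (finsum_vec TYPE('a) (Suc d) (\<lambda>k. c k \<cdot>\<^sub>v u k) {..d}) = dim_vec (lin_comb d u c)"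
    using finsum_vec_closed[OF Pi] by (simp add: lin_comb_def)
  fix r assume "r < dim_vec (lin_comb d u c)"
  hence r: "r < Suc d" by (simp add: lin_comb_def)
  have "finsum_vec TYPE('a) (Suc d) (\<lambda>k. c k \<cdot>\<^sub>v u k) {..d} $ r = (\<Sum>k\<le>d. (c k \<cdot>\<^sub>v u k) $ r)"
    by (rule index_finsum_vec[OF _ r Pi]) simp
  also have "\<dots> = (\<Sum>k\<le>d. c k * u k $ r)"
    using u r by (intro sum.cong refl) (metis atMost_iff carrier_vecD index_smult_vec(1))
  finally show "finsum_vec TYPE('a) (Suc d) (\<lambda>k. c k \<cdot>\<^sub>v u k) {..d} $ r = lin_comb d u c $ r"
    using r by (simp add: lin_comb_def)
qed

lemma smult_vec_eq_zero_iff: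
  assumes "(x :: 'a :: field vec) \<in> carrier_vec n"
  shows "c \<cdot>\<^sub>v x = 0\<^sub>v n \<longleftrightarrow> c = 0 \<or> x = 0\<^sub>v n"
proof
  assume h: "c \<cdot>\<^sub>v x = 0\<^sub>v n"
  have "x $ i = 0" if "c \<noteq> 0" "i < n" for i
    using arg_cong[OF h, of "\<lambda>v. v $ i"] assms that by simp
  thus "c = 0 \<or> x = 0\<^sub>v n" using assms by (auto intro!: eq_vecI)
qed (use assms in \<open>auto intro!: eq_vecI\<close>)

lemma zero_smult_vec [simp]: "(x :: 'a :: semiring_0 vec) \<in> carrier_vec n \<Longrightarrow> 0 \<cdot>\<^sub>v x = 0\<^sub>v n"
  by (intro eq_vecI) auto

lemma smult_zero_vec_right [simp]: "c \<cdot>\<^sub>v 0\<^sub>v n = (0\<^sub>v n :: 'a :: semiring_0 vec)"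
  by (intro eq_vecI) auto

lemma mult_mat_zero_vec [simp]: "(M :: 'a :: semiring_0 mat) \<in> carrier_mat nr n \<Longrightarrow> M *\<^sub>v 0\<^sub>v n = 0\<^sub>v nr"
  by (intro eq_vecI) (auto simp: scalar_prod_def)

lemma zero_mat_mult_vec [simp]: "(x :: 'a :: semiring_0 vec) \<in> carrier_vec n \<Longrightarrow> 0\<^sub>m nr n *\<^sub>v x = 0\<^sub>v nr"
  by (intro eq_vecI) (auto simp: scalar_prod_def)

lemma smult_mat_mult_vec:
  assumes "(A :: 'a :: field mat) \<in> carrier_mat n n" "v \<in> carrier_vec n"
  shows "(a \<cdot>\<^sub>m A) *\<^sub>v v = a \<cdot>\<^sub>v (A *\<^sub>v v)"
  using assms by (intro eq_vecI) (auto simp: scalar_prod_def sum_distrib_left ac_simps)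

lemma minus_smult_one_mult_vec:
  assumes M: "(M :: 'a :: field mat) \<in> carrier_mat n n" and w: "w \<in> carrier_vec n"
  shows "(M - t \<cdot>\<^sub>m 1\<^sub>m n) *\<^sub>v w = M *\<^sub>v w - t \<cdot>\<^sub>v w"
  using M w by (simp add: minus_mult_distrib_mat_vec[of _ n n] smult_mat_mult_vec[of _ n])

lemma mult3_mat_vec:
  assumes "A \<in> carrier_mat n n" "B \<in> carrier_mat n n" "C \<in> carrier_mat n n" "w \<in> carrier_vec n"
  shows "(A * B * C) *\<^sub>v w = A *\<^sub>v (B *\<^sub>v (C *\<^sub>v w))"
  using assms by (simp add: assoc_mult_mat_vec[of _ n n _ n])

lemma eq_smult_add_if_minus_eq:
  assumes "(x :: 'a :: field vec) \<in> carrier_vec n" "y \<in> carrier_vec n" "z \<in> carrier_vec n"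
    and "x - t \<cdot>\<^sub>v y = z"
  shows "x = t \<cdot>\<^sub>v y + z"
  using assms by (auto intro!: eq_vecI simp: algebra_simps)

lemma mat_eqI_mult_vec:
  assumes B: "(B :: 'a :: field mat) \<in> carrier_mat n n" and C: "C \<in> carrier_mat n n"
    and eq: "\<And>w. w \<in> carrier_vec n \<Longrightarrow> B *\<^sub>v w = C *\<^sub>v w"
  shows "B = C"
proof (rule eq_matI)
  fix i j assume "i < dim_row C" "j < dim_col C"
  hence ij: "i < n" "j < n" using C by auto
  have "(B *\<^sub>v unit_vec n j) $ i = (C *\<^sub>v unit_vec n j) $ i" using eq by simp
  thus "B $$ (i, j) = C $$ (i, j)" using ij B C by simp
qed (use B C in auto)

lemma nonzero_mat_mult_vec:
  assumes B: "(B :: 'a :: field mat) \<in> carrier_mat n n" and nz: "B \<noteq> 0\<^sub>m n n"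
  obtains w where "w \<in> carrier_vec n" "B *\<^sub>v w \<noteq> 0\<^sub>v n"
  using mat_eqI_mult_vec[OF B zero_carrier_mat[of n n]] nz by fastforce

lemma independent_is_basis:
  fixes u :: "nat \<Rightarrow> 'a::field vec"
  assumes u: "\<And>k. k \<le> d \<Longrightarrow> u k \<in> carrier_vec (Suc d)"
    and ind: "\<And>c k. lin_comb d u c = 0\<^sub>v (Suc d) \<Longrightarrow> k \<le> d \<Longrightarrow> c k = 0"
  shows "is_basis d u"
proof -
  let ?n = "Suc d"
  define P where "P = mat ?n ?n (\<lambda>(i,k). u k $ i)"
  have P: "P \<in> carrier_mat ?n ?n" by (simp add: P_def)
  have Pv: "P *\<^sub>v v = lin_comb d u (\<lambda>k. v $ k)" if v: "v \<in> carrier_vec ?n" for v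
  proof (rule eq_vecI)
    fix i assume "i < dim_vec (lin_comb d u (\<lambda>k. v $ k))"
    hence i: "i < ?n" by (simp add: lin_comb_def)
    have "(P *\<^sub>v v) $ i = (\<Sum>k\<in>{0..<?n}. P $$ (i,k) * v $ k)"
      using i P v by (simp add: scalar_prod_def)
    also have "\<dots> = (\<Sum>k\<le>d. v $ k * u k $ i)"
      using i by (intro sum.cong) (auto simp: P_def)
    finally show "(P *\<^sub>v v) $ i = lin_comb d u (\<lambda>k. v $ k) $ i" using i by (simp add: lin_comb_def)
  qed (simp add: P_def lin_comb_def)
  \<comment> \<open>The columns of \<open>P\<close> are the \<open>u k\<close>; independence makes \<open>P\<close> invertible, which gives spanning.\<close>
  have "det P \<noteq> 0"
  proof
    assume "det P = 0"
    then obtain v where v: "v \<in> carrier_vec ?n" "v \<noteq> 0\<^sub>v ?n" "P *\<^sub>v v = 0\<^sub>v ?n"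
      using det_0_iff_vec_prod_zero_field[OF P] by auto
    have "v $ k = 0" if "k < ?n" for k
      using ind[of "\<lambda>k. v $ k" k] Pv[OF v(1)] v(3) that by simp
    with v show False by (auto intro!: eq_vecI)
  qed
  then obtain Q where Q: "Q \<in> carrier_mat ?n ?n" "P * Q = 1\<^sub>m ?n"
    using det_non_zero_imp_unit[OF P] unfolding Units_def ring_mat_def by auto
  have "\<exists>c. w = lin_comb d u c" if w: "w \<in> carrier_vec ?n" for w
  proof
    have "w = P *\<^sub>v (Q *\<^sub>v w)" using P Q w by (simp flip: assoc_mult_mat_vec)
    thus "w = lin_comb d u (\<lambda>k. (Q *\<^sub>v w) $ k)" using Pv Q w by simp
  qed
  thus ?thesis unfolding is_basis_def using u ind by blast
qed

lemma basis_carrier: "is_basis d u \<Longrightarrow> k \<le> d \<Longrightarrow> u k \<in> carrier_vec (Suc d)"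
  unfolding is_basis_def by simp

lemma basis_coeff_eq_zero: "is_basis d u \<Longrightarrow> lin_comb d u c = 0\<^sub>v (Suc d) \<Longrightarrow> k \<le> d \<Longrightarrow> c k = 0"
  unfolding is_basis_def by simp

lemma basis_spans: "is_basis d u \<Longrightarrow> w \<in> carrier_vec (Suc d) \<Longrightarrow> \<exists>c. w = lin_comb d u c"
  unfolding is_basis_def by simp

lemma basis_nonzero:
  assumes b: "is_basis d (u :: nat \<Rightarrow> 'a::field vec)" and k: "k \<le> d"
  shows "u k \<noteq> 0\<^sub>v (Suc d)"
proof
  assume "u k = 0\<^sub>v (Suc d)"
  hence "lin_comb d u (\<lambda>j. if j = k then 1 else 0) = 0\<^sub>v (Suc d)"
    by (intro lin_comb_eq_zero) auto
  from basis_coeff_eq_zero[OF b this k] show False by simp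
qed

lemma basis_rev:
  assumes b: "is_basis d u"
  shows "is_basis d (\<lambda>k. u (d - k))"
  unfolding is_basis_def
proof (intro conjI allI impI ballI)
  fix k assume "k \<le> d" thus "u (d - k) \<in> carrier_vec (Suc d)" using basis_carrier[OF b] by simp
next
  fix c k assume "lin_comb d (\<lambda>k. u (d - k)) c = 0\<^sub>v (Suc d)" and k: "k \<le> d"
  hence "c (d - (d - k)) = 0" by (intro basis_coeff_eq_zero[OF b]) (simp_all add: lin_comb_rev)
  thus "c k = 0" using k by simp
next
  fix w :: "'a vec" assume "w \<in> carrier_vec (Suc d)"
  then obtain c where "w = lin_comb d u c" using basis_spans[OF b] by blast
  also have "\<dots> = lin_comb d (\<lambda>k. u (d - k)) (\<lambda>k. c (d - k))"
    unfolding lin_comb_rev by (rule lin_comb_cong) auto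
  finally show "\<exists>c. w = lin_comb d (\<lambda>k. u (d - k)) c" by blast
qed

lemma mat_eq_on_basis:
  assumes b: "is_basis d u" and B: "(B :: 'a :: field mat) \<in> carrier_mat (Suc d) (Suc d)"
    and C: "C \<in> carrier_mat (Suc d) (Suc d)" and eq: "\<And>k. k \<le> d \<Longrightarrow> B *\<^sub>v u k = C *\<^sub>v u k"
  shows "B = C"
proof (rule mat_eqI_mult_vec[OF B C])
  fix w :: "'a vec" assume "w \<in> carrier_vec (Suc d)"
  then obtain c where w: "w = lin_comb d u c" using basis_spans[OF b] by blast
  have u: "\<And>k. k \<le> d \<Longrightarrow> u k \<in> carrier_vec (Suc d)" using basis_carrier[OF b] by blast
  have "B *\<^sub>v w = lin_comb d (\<lambda>k. B *\<^sub>v u k) c" unfolding w by (rule mult_mat_vec_lin_comb[OF B u])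
  also have "\<dots> = lin_comb d (\<lambda>k. C *\<^sub>v u k) c" by (rule lin_comb_cong) (auto simp: eq)
  also have "\<dots> = C *\<^sub>v w" unfolding w by (rule mult_mat_vec_lin_comb[OF C u, symmetric])
  finally show "B *\<^sub>v w = C *\<^sub>v w" .
qed

abbreviation vec_line :: "'a::comm_ring_1 vec \<Rightarrow> 'a vec set" where
  "vec_line u \<equiv> {c \<cdot>\<^sub>v u | c. True}"

lemma image_vec_line_eq_vec_line_iff:
  assumes B: "(B :: 'a :: field mat) \<in> carrier_mat n n" and x: "x \<in> carrier_vec n"
    and y: "y \<in> carrier_vec n" and y0: "y \<noteq> 0\<^sub>v n"
  shows "(\<lambda>z. B *\<^sub>v z) ` vec_line x = vec_line y \<longleftrightarrow> (\<exists>a. a \<noteq> 0 \<and> B *\<^sub>v x = a \<cdot>\<^sub>v y)"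
proof
  assume img: "(\<lambda>z. B *\<^sub>v z) ` vec_line x = vec_line y"
  have "B *\<^sub>v (1 \<cdot>\<^sub>v x) \<in> vec_line y" using img by blast
  then obtain a where a: "B *\<^sub>v x = a \<cdot>\<^sub>v y" using x by auto
  have "1 \<cdot>\<^sub>v y \<in> (\<lambda>z. B *\<^sub>v z) ` vec_line x" using img by blast
  then obtain c where "y = B *\<^sub>v (c \<cdot>\<^sub>v x)" using y by auto
  hence "y = (c * a) \<cdot>\<^sub>v y" unfolding mult_mat_vec[OF B x] a by (simp add: smult_smult_assoc)
  hence "a \<noteq> 0" using y0 y by auto
  with a show "\<exists>a. a \<noteq> 0 \<and> B *\<^sub>v x = a \<cdot>\<^sub>v y" by blast
next
  assume "\<exists>a. a \<noteq> 0 \<and> B *\<^sub>v x = a \<cdot>\<^sub>v y"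
  then obtain a where a: "a \<noteq> 0" "B *\<^sub>v x = a \<cdot>\<^sub>v y" by blast
  have e: "B *\<^sub>v (c \<cdot>\<^sub>v x) = (c * a) \<cdot>\<^sub>v y" for c
    unfolding mult_mat_vec[OF B x] a(2) by (simp add: smult_smult_assoc)
  have "c \<cdot>\<^sub>v y = B *\<^sub>v ((c / a) \<cdot>\<^sub>v x)" for c unfolding e using a(1) by simp
  thus "(\<lambda>z. B *\<^sub>v z) ` vec_line x = vec_line y" using e by blast
qed

lemma image_vec_line_eq_zero_iff:
  assumes B: "(B :: 'a :: field mat) \<in> carrier_mat n n" and x: "x \<in> carrier_vec n"
  shows "(\<lambda>z. B *\<^sub>v z) ` vec_line x = {0\<^sub>v n} \<longleftrightarrow> B *\<^sub>v x = 0\<^sub>v n"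
proof
  assume "(\<lambda>z. B *\<^sub>v z) ` vec_line x = {0\<^sub>v n}"
  moreover have "B *\<^sub>v (1 \<cdot>\<^sub>v x) \<in> (\<lambda>z. B *\<^sub>v z) ` vec_line x" by blast
  ultimately show "B *\<^sub>v x = 0\<^sub>v n" using x by simp
next
  assume Bx: "B *\<^sub>v x = 0\<^sub>v n"
  have "B *\<^sub>v (c \<cdot>\<^sub>v x) = 0\<^sub>v n" for c unfolding mult_mat_vec[OF B x] Bx by simp
  moreover have "B *\<^sub>v (0 \<cdot>\<^sub>v x) \<in> (\<lambda>z. B *\<^sub>v z) ` vec_line x" by blast
  ultimately show "(\<lambda>z. B *\<^sub>v z) ` vec_line x = {0\<^sub>v n}" by auto
qed

text \<open>\<open>flag_adapted d G u\<close>: \<open>u\<^sub>k \<in> G\<^sub>0V + \<dots> + G\<^sub>kV\<close> (when \<open>\<Sum>G\<^sub>i = I\<close>) and \<open>G\<^sub>ku\<^sub>k \<noteq> 0\<close>.\<close>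

definition flag_adapted :: "nat \<Rightarrow> (nat \<Rightarrow> 'a::field mat) \<Rightarrow> (nat \<Rightarrow> 'a vec) \<Rightarrow> bool" where
  "flag_adapted d G u \<longleftrightarrow>
     (\<forall>l\<le>d. \<forall>k<l. G l *\<^sub>v u k = 0\<^sub>v (Suc d)) \<and> (\<forall>k\<le>d. G k *\<^sub>v u k \<noteq> 0\<^sub>v (Suc d))"

lemma flag_adapted_coeff_eq_zero:
  assumes fa: "flag_adapted d G u"
    and u: "\<And>k. k \<le> d \<Longrightarrow> u k \<in> carrier_vec (Suc d)"
    and G: "\<And>l. l \<le> d \<Longrightarrow> G l \<in> carrier_mat (Suc d) (Suc d)"
    and killed: "\<And>l. m \<le> l \<Longrightarrow> l \<le> d \<Longrightarrow> G l *\<^sub>v lin_comb d u c = 0\<^sub>v (Suc d)"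
  shows "m \<le> k \<Longrightarrow> k \<le> d \<Longrightarrow> c k = 0"
proof (induction "d - k" arbitrary: k rule: less_induct)
  case less
  have "G k *\<^sub>v lin_comb d u c = lin_comb d (\<lambda>j. G k *\<^sub>v u j) c"
    by (rule mult_mat_vec_lin_comb[OF G[OF less(3)] u])
  also have "\<dots> = c k \<cdot>\<^sub>v (G k *\<^sub>v u k)"
  proof (rule lin_comb_single[OF less(3)])
    show "G k *\<^sub>v u k \<in> carrier_vec (Suc d)"
      by (rule mult_mat_vec_carrier[OF G[OF less(3)] u[OF less(3)]])
    fix j assume j: "j \<le> d" "j \<noteq> k"
    show "c j = 0 \<or> G k *\<^sub>v u j = 0\<^sub>v (Suc d)"
    proof (cases "j < k")
      case True thus ?thesis using fa less(3) unfolding flag_adapted_def by blast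
    next
      case False
      thus ?thesis using less(1)[of j] less(2,3) j by auto
    qed
  qed
  finally have "c k \<cdot>\<^sub>v (G k *\<^sub>v u k) = 0\<^sub>v (Suc d)" using killed[OF less(2,3)] by simp
  thus "c k = 0" using fa less(3) G[OF less(3)] u[OF less(3)]
    unfolding flag_adapted_def by (simp add: smult_vec_eq_zero_iff)
qed

lemma flag_adapted_is_basis:
  assumes "flag_adapted d G (u :: nat \<Rightarrow> 'a::field vec)"
    and u: "\<And>k. k \<le> d \<Longrightarrow> u k \<in> carrier_vec (Suc d)"
    and G: "\<And>l. l \<le> d \<Longrightarrow> G l \<in> carrier_mat (Suc d) (Suc d)"
  shows "is_basis d u"
proof (rule independent_is_basis[OF u])
  fix c k assume "lin_comb d u c = 0\<^sub>v (Suc d)" "k \<le> d"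
  thus "c k = 0" using flag_adapted_coeff_eq_zero[OF assms, of 0 c k] G by simp
qed

lemma flag_adapted_revI:
  assumes "\<And>l k. l < k \<Longrightarrow> k \<le> d \<Longrightarrow> G l *\<^sub>v u k = 0\<^sub>v (Suc d)"
    and "\<And>k. k \<le> d \<Longrightarrow> G k *\<^sub>v u k \<noteq> 0\<^sub>v (Suc d)"
  shows "flag_adapted d (\<lambda>l. G (d - l)) (\<lambda>k. u (d - k))"
  unfolding flag_adapted_def using assms by (auto simp: diff_less_mono2)

lemma flag_adapted_revD:
  assumes "flag_adapted d (\<lambda>l. G (d - l)) (\<lambda>k. u (d - k))"
  shows "l < k \<Longrightarrow> k \<le> d \<Longrightarrow> G l *\<^sub>v u k = 0\<^sub>v (Suc d)"
    and "k \<le> d \<Longrightarrow> G k *\<^sub>v u k \<noteq> 0\<^sub>v (Suc d)"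
proof -
  have zero: "\<forall>l\<le>d. \<forall>k<l. G (d - l) *\<^sub>v u (d - k) = 0\<^sub>v (Suc d)"
    and diag: "\<forall>k\<le>d. G (d - k) *\<^sub>v u (d - k) \<noteq> 0\<^sub>v (Suc d)"
    using assms unfolding flag_adapted_def by auto
  show "G l *\<^sub>v u k = 0\<^sub>v (Suc d)" if "l < k" "k \<le> d"
    using zero[rule_format, of "d - l" "d - k"] that by simp
  show "G k *\<^sub>v u k \<noteq> 0\<^sub>v (Suc d)" if "k \<le> d"
    using diag[rule_format, of "d - k"] that by simp
qed

lemma flag_adapted_rev_coeff_eq_zero:
  assumes fa: "flag_adapted d (\<lambda>l. G (d - l)) (\<lambda>k. u (d - k))"
    and u: "\<And>k. k \<le> d \<Longrightarrow> u k \<in> carrier_vec (Suc d)"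
    and G: "\<And>l. l \<le> d \<Longrightarrow> G l \<in> carrier_mat (Suc d) (Suc d)"
    and killed: "\<And>l. l < m \<Longrightarrow> l \<le> d \<Longrightarrow> G l *\<^sub>v lin_comb d u c = 0\<^sub>v (Suc d)"
    and k: "k < m" "k \<le> d"
  shows "c k = 0"
proof -
  have w: "lin_comb d u c = lin_comb d (\<lambda>k. u (d - k)) (\<lambda>k. c (d - k))"
    unfolding lin_comb_rev by (rule lin_comb_cong) auto
  have "c (d - (d - k)) = 0"
  proof (rule flag_adapted_coeff_eq_zero[OF fa, where m="Suc d - m" and c="\<lambda>k. c (d - k)" and k="d - k"])
    fix l assume "Suc d - m \<le> l" "l \<le> d"
    thus "G (d - l) *\<^sub>v lin_comb d (\<lambda>k. u (d - k)) (\<lambda>k. c (d - k)) = 0\<^sub>v (Suc d)"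
      using killed[of "d - l"] w by simp
  qed (use u G k in auto)
  thus ?thesis using k by simp
qed

lemma flag_intersection_line:
  assumes b: "is_basis d u" and faF: "flag_adapted d F u"
    and faE: "flag_adapted d (\<lambda>l. E (d - l)) (\<lambda>k. u (d - k))"
    and F: "\<And>l. l \<le> d \<Longrightarrow> F l \<in> carrier_mat (Suc d) (Suc d)"
    and E: "\<And>l. l \<le> d \<Longrightarrow> E l \<in> carrier_mat (Suc d) (Suc d)"
    and w: "w \<in> carrier_vec (Suc d)"
    and F_high: "\<And>l. i \<le> l \<Longrightarrow> l \<le> d \<Longrightarrow> F l *\<^sub>v w = 0\<^sub>v (Suc d)"
    and E_low: "\<And>l. Suc l < i \<Longrightarrow> E l *\<^sub>v w = 0\<^sub>v (Suc d)"
    and i: "1 \<le> i" "i \<le> d"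
  obtains c where "w = c \<cdot>\<^sub>v u (i - 1)"
proof -
  have u: "\<And>k. k \<le> d \<Longrightarrow> u k \<in> carrier_vec (Suc d)" by (rule basis_carrier[OF b])
  obtain c where wc: "w = lin_comb d u c" using basis_spans[OF b w] by blast
  have high: "c k = 0" if "i \<le> k" "k \<le> d" for k
    using flag_adapted_coeff_eq_zero[OF faF u F, of i c k] F_high wc that by simp
  have low: "c k = 0" if "k < i - 1" "k \<le> d" for k
    using flag_adapted_rev_coeff_eq_zero[OF faE u E, of "i - 1" c k] E_low wc that by simp
  have "w = c (i - 1) \<cdot>\<^sub>v u (i - 1)"
    unfolding wc
  proof (rule lin_comb_single)
    fix k assume "k \<le> d" "k \<noteq> i - 1"
    thus "c k = 0 \<or> u k = 0\<^sub>v (Suc d)" using high low by (cases "k < i - 1") auto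
  qed (use i u in auto)
  thus ?thesis by (rule that)
qed

text \<open>The matrix of \<open>N\<close> in a basis \<open>g\<^sub>i \<in> G\<^sub>iV\<close> has entries \<open>G\<^sub>iNG\<^sub>j\<close>; these are the two
  Hessenberg shapes with nonvanishing first off-diagonal.\<close>

definition unreduced_upper_hessenberg :: "nat \<Rightarrow> (nat \<Rightarrow> 'a::field mat) \<Rightarrow> 'a mat \<Rightarrow> bool" where
  "unreduced_upper_hessenberg d G N \<longleftrightarrow>
     (\<forall>i\<le>d. \<forall>j\<le>d. Suc j < i \<longrightarrow> G i * N * G j = 0\<^sub>m (Suc d) (Suc d)) \<and>
     (\<forall>j<d. G (Suc j) * N * G j \<noteq> 0\<^sub>m (Suc d) (Suc d))"

definition unreduced_lower_hessenberg :: "nat \<Rightarrow> (nat \<Rightarrow> 'a::field mat) \<Rightarrow> 'a mat \<Rightarrow> bool" where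
  "unreduced_lower_hessenberg d G N \<longleftrightarrow>
     (\<forall>i\<le>d. \<forall>j\<le>d. Suc i < j \<longrightarrow> G i * N * G j = 0\<^sub>m (Suc d) (Suc d)) \<and>
     (\<forall>i<d. G i * N * G (Suc i) \<noteq> 0\<^sub>m (Suc d) (Suc d))"

lemma unreduced_upper_hessenberg_rev_iff:
  "unreduced_upper_hessenberg d (\<lambda>k. G (d - k)) N \<longleftrightarrow> unreduced_lower_hessenberg d G N"
proof -
  have zeros: "(\<forall>i\<le>d. \<forall>j\<le>d. Suc j < i \<longrightarrow> P (d - i) (d - j)) \<longleftrightarrow> (\<forall>i\<le>d. \<forall>j\<le>d. Suc i < j \<longrightarrow> P i j)"
    for P :: "nat \<Rightarrow> nat \<Rightarrow> bool"
  proof (intro iffI allI impI)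
    fix i j assume h: "\<forall>i\<le>d. \<forall>j\<le>d. Suc j < i \<longrightarrow> P (d - i) (d - j)" and "i \<le> d" "j \<le> d" "Suc i < j"
    moreover from this have "Suc (d - j) < d - i" by arith
    ultimately show "P i j" using h[rule_format, of "d - i" "d - j"] by simp
  next
    fix i j assume "\<forall>i\<le>d. \<forall>j\<le>d. Suc i < j \<longrightarrow> P i j" "i \<le> d" "j \<le> d" "Suc j < i"
    moreover from this have "Suc (d - i) < d - j" by arith
    ultimately show "P (d - i) (d - j)" by simp
  qed
  have subdiagonal: "(\<forall>j<d. Q (d - Suc j) (d - j)) \<longleftrightarrow> (\<forall>i<d. Q i (Suc i))" for Q :: "nat \<Rightarrow> nat \<Rightarrow> bool"
  proof (intro iffI allI impI)
    fix i assume h: "\<forall>j<d. Q (d - Suc j) (d - j)" and "i < d"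
    moreover from this have "d - Suc (d - Suc i) = i" "d - (d - Suc i) = Suc i" by arith+
    ultimately show "Q i (Suc i)" using h[rule_format, of "d - Suc i"] by simp
  next
    fix j assume h: "\<forall>i<d. Q i (Suc i)" and "j < d"
    hence "d - Suc j < d" "Suc (d - Suc j) = d - j" by arith+
    thus "Q (d - Suc j) (d - j)" using h by metis
  qed
  show ?thesis
    unfolding unreduced_upper_hessenberg_def unreduced_lower_hessenberg_def
    using zeros[of "\<lambda>i j. G i * N * G j = 0\<^sub>m (Suc d) (Suc d)"]
      subdiagonal[of "\<lambda>i j. G i * N * G j \<noteq> 0\<^sub>m (Suc d) (Suc d)"] by simp
qed

lemma prim_idem_carrier:
  "A \<in> carrier_mat (Suc d) (Suc d) \<Longrightarrow> prim_idem d A th i \<in> carrier_mat (Suc d) (Suc d)"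
proof -
  assume A: "A \<in> carrier_mat (Suc d) (Suc d)"
  have "foldr (\<lambda>j M. ((1 / (th i - th j)) \<cdot>\<^sub>m (A - th j \<cdot>\<^sub>m 1\<^sub>m (Suc d))) * M) js (1\<^sub>m (Suc d))
      \<in> carrier_mat (Suc d) (Suc d)" for js
    using A by (induction js) auto
  thus ?thesis unfolding prim_idem_def .
qed

lemma prim_idem_mult_eigenvector:
  fixes A :: "'a::field mat"
  assumes A: "A \<in> carrier_mat (Suc d) (Suc d)" and x: "x \<in> carrier_vec (Suc d)"
    and ev: "A *\<^sub>v x = t \<cdot>\<^sub>v x"
  shows "prim_idem d A th i *\<^sub>v x = (\<Prod>j\<leftarrow>filter (\<lambda>j. j \<noteq> i) [0..<Suc d]. (t - th j) / (th i - th j)) \<cdot>\<^sub>v x"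
proof -
  let ?P = "\<lambda>js. foldr (\<lambda>j M. ((1 / (th i - th j)) \<cdot>\<^sub>m (A - th j \<cdot>\<^sub>m 1\<^sub>m (Suc d))) * M) js (1\<^sub>m (Suc d))"
  have "(A - th j \<cdot>\<^sub>m 1\<^sub>m (Suc d)) *\<^sub>v x = (t - th j) \<cdot>\<^sub>v x" for j
    using A x by (auto intro!: eq_vecI simp: minus_smult_one_mult_vec ev algebra_simps)
  hence factor: "((1 / (th i - th j)) \<cdot>\<^sub>m (A - th j \<cdot>\<^sub>m 1\<^sub>m (Suc d))) *\<^sub>v x = ((t - th j) / (th i - th j)) \<cdot>\<^sub>v x" for j
    using A x by (subst smult_mat_mult_vec[of _ "Suc d"]) (auto simp: smult_smult_assoc)
  have "?P js \<in> carrier_mat (Suc d) (Suc d) \<and> ?P js *\<^sub>v x = (\<Prod>j\<leftarrow>js. (t - th j) / (th i - th j)) \<cdot>\<^sub>v x" for js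
  proof (induction js)
    case (Cons j js)
    let ?F = "(1 / (th i - th j)) \<cdot>\<^sub>m (A - th j \<cdot>\<^sub>m 1\<^sub>m (Suc d))"
    have F: "?F \<in> carrier_mat (Suc d) (Suc d)" using A by (intro smult_carrier_mat minus_carrier_mat) auto
    have "?P (j # js) *\<^sub>v x = ?F *\<^sub>v (?P js *\<^sub>v x)"
      using Cons F x by (simp add: assoc_mult_mat_vec[of _ "Suc d" "Suc d" _ "Suc d"])
    also have "\<dots> = (\<Prod>j\<leftarrow>j # js. (t - th j) / (th i - th j)) \<cdot>\<^sub>v x"
      using Cons F x by (simp add: mult_mat_vec factor smult_smult_assoc mult.commute)
    finally show ?case using Cons F by simp
  qed (use x in simp)
  thus ?thesis unfolding prim_idem_def by blast
qed

lemma prim_idem_mult_eigenvector_cases: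
  fixes A :: "'a::field mat"
  assumes eo: "eigenvalue_ordering d A th" and x: "x \<in> carrier_vec (Suc d)"
    and ev: "A *\<^sub>v x = th k \<cdot>\<^sub>v x" and i: "i \<le> d" and k: "k \<le> d"
  shows "prim_idem d A th i *\<^sub>v x = (if i = k then x else 0\<^sub>v (Suc d))"
proof -
  have A: "A \<in> carrier_mat (Suc d) (Suc d)" and inj: "inj_on th {..d}"
    using eo unfolding eigenvalue_ordering_def by auto
  let ?js = "filter (\<lambda>j. j \<noteq> i) [0..<Suc d]"
  have "(\<Prod>j\<leftarrow>?js. (th k - th j) / (th i - th j)) = (if i = k then 1 else 0)"
  proof (cases "i = k")
    case True
    have "th i \<noteq> th j" if "j \<in> set ?js" for j
      using that inj i unfolding inj_on_def by (auto simp del: upt_Suc)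
    hence "map (\<lambda>j. (th k - th j) / (th i - th j)) ?js = map (\<lambda>_. 1) ?js"
      using True by simp
    thus ?thesis using True by (simp add: map_replicate_const)
  next
    case False
    hence "k \<in> set ?js" using k by (auto simp del: upt_Suc)
    thus ?thesis using False by (force simp: prod_list_zero_iff)
  qed
  thus ?thesis using prim_idem_mult_eigenvector[OF A x ev, of th i] x by simp
qed

lemma prim_idem_eigenbasis:
  fixes A :: "'a::field mat"
  assumes eo: "eigenvalue_ordering d A th"
  obtains x where "is_basis d x" "\<And>k. k \<le> d \<Longrightarrow> A *\<^sub>v x k = th k \<cdot>\<^sub>v x k"
    "\<And>i k. i \<le> d \<Longrightarrow> k \<le> d \<Longrightarrow> prim_idem d A th i *\<^sub>v x k = (if i = k then x k else 0\<^sub>v (Suc d))"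
    "\<And>j c. j \<le> d \<Longrightarrow> prim_idem d A th j *\<^sub>v lin_comb d x c = c j \<cdot>\<^sub>v x j"
proof -
  let ?n = "Suc d" and ?E = "prim_idem d A th"
  have A: "A \<in> carrier_mat ?n ?n" and ev: "\<And>k. k \<le> d \<Longrightarrow> eigenvalue A (th k)"
    using eo unfolding eigenvalue_ordering_def by auto
  have "\<forall>k. \<exists>v. k \<le> d \<longrightarrow> eigenvector A v (th k)"
    using ev unfolding eigenvalue_def by blast
  then obtain x where "\<forall>k\<le>d. eigenvector A (x k) (th k)"
    using choice[of "\<lambda>k v. k \<le> d \<longrightarrow> eigenvector A v (th k)"] by blast
  hence xc: "\<And>k. k \<le> d \<Longrightarrow> x k \<in> carrier_vec ?n" and x0: "\<And>k. k \<le> d \<Longrightarrow> x k \<noteq> 0\<^sub>v ?n"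
    and xA: "\<And>k. k \<le> d \<Longrightarrow> A *\<^sub>v x k = th k \<cdot>\<^sub>v x k"
    using A unfolding eigenvector_def by auto
  have Ec: "?E j \<in> carrier_mat ?n ?n" for j by (rule prim_idem_carrier[OF A])
  have Ex: "?E i *\<^sub>v x k = (if i = k then x k else 0\<^sub>v ?n)" if "i \<le> d" "k \<le> d" for i k
    using prim_idem_mult_eigenvector_cases[OF eo xc xA] that by blast
  have E_lin_comb: "?E j *\<^sub>v lin_comb d x c = c j \<cdot>\<^sub>v x j" if j: "j \<le> d" for j c
  proof -
    have "?E j *\<^sub>v lin_comb d x c = lin_comb d (\<lambda>k. ?E j *\<^sub>v x k) c"
      by (rule mult_mat_vec_lin_comb[OF Ec xc])
    also have "\<dots> = c j \<cdot>\<^sub>v (?E j *\<^sub>v x j)"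
      by (rule lin_comb_single[OF j]) (use Ec xc j Ex in auto)
    finally show ?thesis using Ex j by simp
  qed
  have "is_basis d x"
  proof (rule independent_is_basis[OF xc])
    fix c k assume "lin_comb d x c = 0\<^sub>v ?n" "k \<le> d"
    hence "c k \<cdot>\<^sub>v x k = 0\<^sub>v ?n" using E_lin_comb[of k c] Ec[of k] by simp
    thus "c k = 0" using smult_vec_eq_zero_iff[OF xc] x0 \<open>k \<le> d\<close> by blast
  qed
  from this xA Ex E_lin_comb show ?thesis by (rule that)
qed

locale primitive_idempotents =
  fixes d :: nat and M :: "'a::field mat" and th :: "nat \<Rightarrow> 'a" and E :: "nat \<Rightarrow> 'a mat"
  assumes M_carrier: "M \<in> carrier_mat (Suc d) (Suc d)"
    and th_inj: "inj_on th {..d}"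
    and E_carrier: "j \<le> d \<Longrightarrow> E j \<in> carrier_mat (Suc d) (Suc d)"
    and E_mult_M: "j \<le> d \<Longrightarrow> E j * M = th j \<cdot>\<^sub>m E j"
    and M_mult_E: "j \<le> d \<Longrightarrow> M * E j = th j \<cdot>\<^sub>m E j"
    and E_mult_E: "i \<le> d \<Longrightarrow> j \<le> d \<Longrightarrow> E i * E j = (if i = j then E j else 0\<^sub>m (Suc d) (Suc d))"
    and sum_E: "w \<in> carrier_vec (Suc d) \<Longrightarrow> w = lin_comb d (\<lambda>j. E j *\<^sub>v w) (\<lambda>_. 1)"
    and rank_one_E: "j \<le> d \<Longrightarrow> \<exists>x\<in>carrier_vec (Suc d). x \<noteq> 0\<^sub>v (Suc d) \<and> E j *\<^sub>v x = x \<and>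
        (\<forall>w\<in>carrier_vec (Suc d). \<exists>c. E j *\<^sub>v w = c \<cdot>\<^sub>v x)"

lemma prim_idem_primitive_idempotents:
  fixes A :: "'a::field mat"
  assumes eo: "eigenvalue_ordering d A th"
  shows "primitive_idempotents d A th (prim_idem d A th)"
proof -
  let ?n = "Suc d" and ?E = "prim_idem d A th"
  have A: "A \<in> carrier_mat ?n ?n" and inj: "inj_on th {..d}"
    using eo unfolding eigenvalue_ordering_def by auto
  obtain x where basis: "is_basis d x" and xA: "\<And>k. k \<le> d \<Longrightarrow> A *\<^sub>v x k = th k \<cdot>\<^sub>v x k"
    and Ex: "\<And>i k. i \<le> d \<Longrightarrow> k \<le> d \<Longrightarrow> ?E i *\<^sub>v x k = (if i = k then x k else 0\<^sub>v ?n)"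
    and E_lin_comb: "\<And>j c. j \<le> d \<Longrightarrow> ?E j *\<^sub>v lin_comb d x c = c j \<cdot>\<^sub>v x j"
    using prim_idem_eigenbasis[OF eo] by blast
  have xc: "\<And>k. k \<le> d \<Longrightarrow> x k \<in> carrier_vec ?n" by (rule basis_carrier[OF basis])
  have Ec: "?E j \<in> carrier_mat ?n ?n" for j by (rule prim_idem_carrier[OF A])
  show ?thesis
  proof
    fix j assume j: "j \<le> d"
    show "?E j * A = th j \<cdot>\<^sub>m ?E j"
    proof (rule mat_eq_on_basis[OF basis])
      fix k assume k: "k \<le> d"
      show "(?E j * A) *\<^sub>v x k = (th j \<cdot>\<^sub>m ?E j) *\<^sub>v x k"
        using Ec A xc[OF k] xA[OF k] Ex[OF j k]
        by (simp add: assoc_mult_mat_vec[of _ ?n ?n _ ?n] mult_mat_vec[OF Ec] smult_mat_mult_vec[OF Ec])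
    qed (use Ec A in \<open>auto intro: mult_carrier_mat\<close>)
    show "A * ?E j = th j \<cdot>\<^sub>m ?E j"
    proof (rule mat_eq_on_basis[OF basis])
      fix k assume k: "k \<le> d"
      show "(A * ?E j) *\<^sub>v x k = (th j \<cdot>\<^sub>m ?E j) *\<^sub>v x k"
        using Ec A xc[OF k] xA[OF k] Ex[OF j k]
        by (simp add: assoc_mult_mat_vec[of _ ?n ?n _ ?n] smult_mat_mult_vec[OF Ec])
    qed (use Ec A in \<open>auto intro: mult_carrier_mat\<close>)
    show "\<exists>y\<in>carrier_vec ?n. y \<noteq> 0\<^sub>v ?n \<and> ?E j *\<^sub>v y = y \<and> (\<forall>w\<in>carrier_vec ?n. \<exists>c. ?E j *\<^sub>v w = c \<cdot>\<^sub>v y)"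
    proof (intro bexI conjI ballI)
      show "x j \<noteq> 0\<^sub>v ?n" "?E j *\<^sub>v x j = x j" using basis_nonzero[OF basis] Ex j by auto
      fix w :: "'a vec" assume "w \<in> carrier_vec ?n"
      then obtain c where "w = lin_comb d x c" using basis_spans[OF basis] by blast
      thus "\<exists>c. ?E j *\<^sub>v w = c \<cdot>\<^sub>v x j" using E_lin_comb[OF j] by blast
    qed (rule xc[OF j])
    fix i assume i: "i \<le> d"
    show "?E i * ?E j = (if i = j then ?E j else 0\<^sub>m ?n ?n)"
    proof (rule mat_eq_on_basis[OF basis])
      fix k assume k: "k \<le> d"
      show "(?E i * ?E j) *\<^sub>v x k = (if i = j then ?E j else 0\<^sub>m ?n ?n) *\<^sub>v x k"
        using Ec xc[OF k] Ex[OF j k] Ex[OF i k] by (cases "j = k") (simp_all add: assoc_mult_mat_vec[of _ ?n ?n _ ?n])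
    qed (use Ec in \<open>auto intro: mult_carrier_mat\<close>)
  next
    fix w :: "'a vec" assume "w \<in> carrier_vec ?n"
    then obtain c where w: "w = lin_comb d x c" using basis_spans[OF basis] by blast
    have "lin_comb d (\<lambda>j. ?E j *\<^sub>v w) (\<lambda>_. 1) = lin_comb d (\<lambda>j. c j \<cdot>\<^sub>v x j) (\<lambda>_. 1)"
      unfolding w by (rule lin_comb_cong) (simp_all add: E_lin_comb)
    thus "w = lin_comb d (\<lambda>j. ?E j *\<^sub>v w) (\<lambda>_. 1)"
      using lin_comb_smult_vectors[OF xc, where c=c] w by simp
  qed (use A inj Ec in auto)
qed

context primitive_idempotents
begin

lemma th_distinct: "i \<le> d \<Longrightarrow> j \<le> d \<Longrightarrow> i \<noteq> j \<Longrightarrow> th i \<noteq> th j"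
  using th_inj unfolding inj_on_def by auto

lemma E_mult_vec_carrier [simp]:
  "j \<le> d \<Longrightarrow> w \<in> carrier_vec (Suc d) \<Longrightarrow> E j *\<^sub>v w \<in> carrier_vec (Suc d)"
  using E_carrier by (rule mult_mat_vec_carrier)

lemma E_mult_E_vec:
  assumes "l \<le> d" "j \<le> d" "w \<in> carrier_vec (Suc d)"
  shows "E l *\<^sub>v (E j *\<^sub>v w) = (if l = j then E j *\<^sub>v w else 0\<^sub>v (Suc d))"
  using assms E_mult_E[of l j] E_carrier by (simp add: assoc_mult_mat_vec[of _ "Suc d" "Suc d" _ "Suc d", symmetric])

lemma E_mult_shifted_M:
  assumes j: "j \<le> d" and w: "w \<in> carrier_vec (Suc d)"
  shows "E j *\<^sub>v ((M - t \<cdot>\<^sub>m 1\<^sub>m (Suc d)) *\<^sub>v w) = (th j - t) \<cdot>\<^sub>v (E j *\<^sub>v w)"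
proof -
  have "E j *\<^sub>v ((M - t \<cdot>\<^sub>m 1\<^sub>m (Suc d)) *\<^sub>v w) = (E j * M) *\<^sub>v w - t \<cdot>\<^sub>v (E j *\<^sub>v w)"
    using E_carrier[OF j] M_carrier w
    by (simp add: minus_smult_one_mult_vec mult_minus_distrib_mat_vec mult_mat_vec assoc_mult_mat_vec)
  also have "\<dots> = (th j - t) \<cdot>\<^sub>v (E j *\<^sub>v w)"
    using E_carrier[OF j] w by (auto intro!: eq_vecI simp: E_mult_M[OF j] smult_mat_mult_vec algebra_simps)
  finally show ?thesis .
qed

lemma mult_vec_sum_E:
  assumes B: "B \<in> carrier_mat (Suc d) (Suc d)" and w: "w \<in> carrier_vec (Suc d)"
  shows "B *\<^sub>v w = lin_comb d (\<lambda>j. B *\<^sub>v (E j *\<^sub>v w)) (\<lambda>_. 1)"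
proof -
  from sum_E[OF w] have "B *\<^sub>v w = B *\<^sub>v lin_comb d (\<lambda>j. E j *\<^sub>v w) (\<lambda>_. 1)"
    by (rule arg_cong)
  also have "\<dots> = lin_comb d (\<lambda>j. B *\<^sub>v (E j *\<^sub>v w)) (\<lambda>_. 1)"
    by (rule mult_mat_vec_lin_comb[OF B]) (simp add: w)
  finally show ?thesis .
qed

lemma eq_zero_if_E_eq_zero:
  assumes w: "w \<in> carrier_vec (Suc d)" and "\<And>j. j \<le> d \<Longrightarrow> E j *\<^sub>v w = 0\<^sub>v (Suc d)"
  shows "w = 0\<^sub>v (Suc d)"
  using sum_E[OF w] assms(2) lin_comb_eq_zero by metis

lemma mult_vec_eq_zero_if_E:
  assumes B: "B \<in> carrier_mat (Suc d) (Suc d)" and w: "w \<in> carrier_vec (Suc d)"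
    and "\<And>j. j \<le> d \<Longrightarrow> B *\<^sub>v (E j *\<^sub>v w) = 0\<^sub>v (Suc d)"
  shows "B *\<^sub>v w = 0\<^sub>v (Suc d)"
  unfolding mult_vec_sum_E[OF B w] by (rule lin_comb_eq_zero) (use assms(3) in auto)

lemma mult_vec_eq_single_E:
  assumes B: "B \<in> carrier_mat (Suc d) (Suc d)" and w: "w \<in> carrier_vec (Suc d)" and j: "j \<le> d"
    and others: "\<And>i. i \<le> d \<Longrightarrow> i \<noteq> j \<Longrightarrow> B *\<^sub>v (E i *\<^sub>v w) = 0\<^sub>v (Suc d)"
  shows "B *\<^sub>v w = B *\<^sub>v (E j *\<^sub>v w)"
proof -
  have "B *\<^sub>v w = 1 \<cdot>\<^sub>v (B *\<^sub>v (E j *\<^sub>v w))"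
    unfolding mult_vec_sum_E[OF B w] by (rule lin_comb_single[OF j]) (use others B j w in auto)
  thus ?thesis by simp
qed

lemma rank_one_mult_nonzero:
  assumes B: "B \<in> carrier_mat (Suc d) (Suc d)" and j: "j \<le> d"
    and BE: "B * E j \<noteq> 0\<^sub>m (Suc d) (Suc d)" and w: "w \<in> carrier_vec (Suc d)"
    and Ew: "E j *\<^sub>v w \<noteq> 0\<^sub>v (Suc d)"
  shows "B *\<^sub>v (E j *\<^sub>v w) \<noteq> 0\<^sub>v (Suc d)"
proof -
  have Ej: "E j \<in> carrier_mat (Suc d) (Suc d)" by (rule E_carrier[OF j])
  obtain x where x: "x \<in> carrier_vec (Suc d)"
    and rk: "\<And>w. w \<in> carrier_vec (Suc d) \<Longrightarrow> \<exists>c. E j *\<^sub>v w = c \<cdot>\<^sub>v x"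
    using rank_one_E[OF j] by blast
  have Bx: "B *\<^sub>v x \<noteq> 0\<^sub>v (Suc d)"
  proof
    assume Bx: "B *\<^sub>v x = 0\<^sub>v (Suc d)"
    obtain v where v: "v \<in> carrier_vec (Suc d)" and "(B * E j) *\<^sub>v v \<noteq> 0\<^sub>v (Suc d)"
      using nonzero_mat_mult_vec[OF mult_carrier_mat[OF B Ej] BE] by blast
    moreover obtain c where "E j *\<^sub>v v = c \<cdot>\<^sub>v x" using rk[OF v] by blast
    ultimately show False using B Ej x Bx by (simp add: assoc_mult_mat_vec mult_mat_vec)
  qed
  obtain c where c: "E j *\<^sub>v w = c \<cdot>\<^sub>v x" using rk[OF w] by blast
  hence "c \<noteq> 0" using Ew x by auto
  thus ?thesis unfolding c mult_mat_vec[OF B x] using Bx B x by (simp add: smult_vec_eq_zero_iff)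
qed

lemma E_nonzero_on_basis:
  assumes b: "is_basis d u" and l: "l \<le> d"
  obtains k where "k \<le> d" "E l *\<^sub>v u k \<noteq> 0\<^sub>v (Suc d)"
proof -
  obtain x where x: "x \<in> carrier_vec (Suc d)" "x \<noteq> 0\<^sub>v (Suc d)" "E l *\<^sub>v x = x"
    using rank_one_E[OF l] by blast
  obtain c where xc: "x = lin_comb d u c" using basis_spans[OF b x(1)] by blast
  have "E l *\<^sub>v x = lin_comb d (\<lambda>k. E l *\<^sub>v u k) c"
    unfolding xc by (rule mult_mat_vec_lin_comb[OF E_carrier[OF l] basis_carrier[OF b]])
  with x that show ?thesis using lin_comb_eq_zero by metis
qed

lemma primitive_idempotents_rev: "primitive_idempotents d M (\<lambda>k. th (d - k)) (\<lambda>k. E (d - k))"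
proof
  show "inj_on (\<lambda>k. th (d - k)) {..d}"
  proof (rule inj_onI)
    fix a b assume "a \<in> {..d}" "b \<in> {..d}" "th (d - a) = th (d - b)"
    thus "a = b" using th_distinct[of "d - a" "d - b"] by fastforce
  qed
  fix w :: "'a vec" assume w: "w \<in> carrier_vec (Suc d)"
  show "w = lin_comb d (\<lambda>j. E (d - j) *\<^sub>v w) (\<lambda>_. 1)"
    using sum_E[OF w] lin_comb_rev[of d "\<lambda>j. E j *\<^sub>v w" "\<lambda>_. 1"] by simp
qed (use M_carrier E_carrier E_mult_M M_mult_E E_mult_E rank_one_E in auto)

lemma flag_step:
  assumes N: "N \<in> carrier_mat (Suc d) (Suc d)"
    and hess: "\<And>i j. i \<le> d \<Longrightarrow> j \<le> d \<Longrightarrow> Suc j < i \<Longrightarrow> E i * N * E j = 0\<^sub>m (Suc d) (Suc d)"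
    and w: "w \<in> carrier_vec (Suc d)" and low: "\<And>l. k < l \<Longrightarrow> l \<le> d \<Longrightarrow> E l *\<^sub>v w = 0\<^sub>v (Suc d)"
  shows flag_step_zero: "Suc k < l \<Longrightarrow> l \<le> d \<Longrightarrow> E l *\<^sub>v (N *\<^sub>v w) = 0\<^sub>v (Suc d)"
    and flag_step_next: "Suc k \<le> d \<Longrightarrow> E (Suc k) *\<^sub>v (N *\<^sub>v w) = E (Suc k) *\<^sub>v (N *\<^sub>v (E k *\<^sub>v w))"
proof -
  have EN_carrier: "E l * N \<in> carrier_mat (Suc d) (Suc d)" if "l \<le> d" for l
    using E_carrier[OF that] N by simp
  have EN: "(E l * N) *\<^sub>v v = E l *\<^sub>v (N *\<^sub>v v)" if "l \<le> d" "v \<in> carrier_vec (Suc d)" for l v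
    using E_carrier[OF that(1)] N that(2) by (auto simp: assoc_mult_mat_vec)
  have vanish: "(E l * N) *\<^sub>v (E j *\<^sub>v w) = 0\<^sub>v (Suc d)" if "l \<le> d" "j \<le> d" "Suc j < l \<or> k < j" for l j
  proof (cases "k < j")
    case True thus ?thesis using low[of j] that EN_carrier[of l] by simp
  next
    case False
    hence "E l * N * E j = 0\<^sub>m (Suc d) (Suc d)" using hess that by auto
    thus ?thesis using mult3_mat_vec[OF E_carrier[OF that(1)] N E_carrier[OF that(2)] w] EN[OF that(1)] w that(2)
      by simp
  qed
  show "E l *\<^sub>v (N *\<^sub>v w) = 0\<^sub>v (Suc d)" if l: "Suc k < l" "l \<le> d"
  proof -
    have "(E l * N) *\<^sub>v w = 0\<^sub>v (Suc d)"
      by (rule mult_vec_eq_zero_if_E[OF EN_carrier[OF l(2)] w], rule vanish) (use l in auto)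
    thus ?thesis using EN[OF l(2) w] by simp
  qed
  show "E (Suc k) *\<^sub>v (N *\<^sub>v w) = E (Suc k) *\<^sub>v (N *\<^sub>v (E k *\<^sub>v w))" if k: "Suc k \<le> d"
  proof -
    have "(E (Suc k) * N) *\<^sub>v w = (E (Suc k) * N) *\<^sub>v (E k *\<^sub>v w)"
    proof (rule mult_vec_eq_single_E[OF EN_carrier[OF k] w])
      show "k \<le> d" using k by simp
      fix i assume "i \<le> d" "i \<noteq> k"
      thus "(E (Suc k) * N) *\<^sub>v (E i *\<^sub>v w) = 0\<^sub>v (Suc d)" using k by (intro vanish) auto
    qed
    thus ?thesis using EN[OF k] w k by simp
  qed
qed

lemma flag_step_rev:
  assumes N: "N \<in> carrier_mat (Suc d) (Suc d)"
    and hess: "\<And>i j. i \<le> d \<Longrightarrow> j \<le> d \<Longrightarrow> Suc i < j \<Longrightarrow> E i * N * E j = 0\<^sub>m (Suc d) (Suc d)"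
    and w: "w \<in> carrier_vec (Suc d)" and high: "\<And>l. l < k \<Longrightarrow> E l *\<^sub>v w = 0\<^sub>v (Suc d)"
    and k: "k \<le> d"
  shows flag_step_rev_zero: "Suc l < k \<Longrightarrow> E l *\<^sub>v (N *\<^sub>v w) = 0\<^sub>v (Suc d)"
    and flag_step_rev_next: "1 \<le> k \<Longrightarrow> E (k - 1) *\<^sub>v (N *\<^sub>v w) = E (k - 1) *\<^sub>v (N *\<^sub>v (E k *\<^sub>v w))"
proof -
  interpret R: primitive_idempotents d M "\<lambda>k. th (d - k)" "\<lambda>k. E (d - k)" by (rule primitive_idempotents_rev)
  have hess': "E (d - i) * N * E (d - j) = 0\<^sub>m (Suc d) (Suc d)" if "i \<le> d" "j \<le> d" "Suc j < i" for i j
    using hess that by simp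
  have low': "E (d - l) *\<^sub>v w = 0\<^sub>v (Suc d)" if "d - k < l" "l \<le> d" for l
    using high that by simp
  show "E l *\<^sub>v (N *\<^sub>v w) = 0\<^sub>v (Suc d)" if "Suc l < k"
    using R.flag_step_zero[OF N hess' w low', where k="d - k" and l="d - l"] that k by simp
  show "E (k - 1) *\<^sub>v (N *\<^sub>v w) = E (k - 1) *\<^sub>v (N *\<^sub>v (E k *\<^sub>v w))" if "1 \<le> k"
  proof -
    have k1: "Suc (d - k) \<le> d" and e1: "d - Suc (d - k) = k - 1" and e2: "d - (d - k) = k"
      using that k by auto
    show ?thesis using R.flag_step_next[OF N hess' w low' k1] unfolding e1 e2 .
  qed
qed

lemma lowering_flag_adapted:
  assumes b: "is_basis d u"
    and low: "\<And>k. 1 \<le> k \<Longrightarrow> k \<le> d \<Longrightarrow> \<exists>b. (M - th k \<cdot>\<^sub>m 1\<^sub>m (Suc d)) *\<^sub>v u k = b \<cdot>\<^sub>v u (k - 1)"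
    and low0: "(M - th 0 \<cdot>\<^sub>m 1\<^sub>m (Suc d)) *\<^sub>v u 0 = 0\<^sub>v (Suc d)"
  shows "flag_adapted d E u"
proof -
  let ?n = "Suc d"
  have u: "\<And>k. k \<le> d \<Longrightarrow> u k \<in> carrier_vec ?n" by (rule basis_carrier[OF b])
  \<comment> \<open>\<open>(\<theta>\<^sub>l - \<theta>\<^sub>k) E\<^sub>l u\<^sub>k = E\<^sub>l (M - \<theta>\<^sub>k) u\<^sub>k\<close> is a multiple of \<open>E\<^sub>l u\<^sub>k\<^sub>-\<^sub>1\<close>\<close>
  have step: "E l *\<^sub>v u k = 0\<^sub>v ?n"
    if k: "k \<le> d" and l: "l \<le> d" "l \<noteq> k" and prev: "k = 0 \<or> E l *\<^sub>v u (k - 1) = 0\<^sub>v ?n" for k l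
  proof -
    have "E l *\<^sub>v ((M - th k \<cdot>\<^sub>m 1\<^sub>m ?n) *\<^sub>v u k) = 0\<^sub>v ?n"
    proof (cases "k = 0")
      case True thus ?thesis using low0 E_carrier l by simp
    next
      case False
      hence "1 \<le> k" by simp
      then obtain b where "(M - th k \<cdot>\<^sub>m 1\<^sub>m ?n) *\<^sub>v u k = b \<cdot>\<^sub>v u (k - 1)" using low k by blast
      thus ?thesis using prev False k mult_mat_vec[OF E_carrier[OF l(1)] u[of "k - 1"]] by simp
    qed
    hence "(th l - th k) \<cdot>\<^sub>v (E l *\<^sub>v u k) = 0\<^sub>v ?n" using E_mult_shifted_M k l u by simp
    thus ?thesis using th_distinct k l u by (simp add: smult_vec_eq_zero_iff)
  qed
  have below: "E l *\<^sub>v u k = 0\<^sub>v ?n" if "l \<le> d" "k < l" for l k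
    using that by (induction k) (auto intro: step)
  have diagonal: "E k *\<^sub>v u k \<noteq> 0\<^sub>v ?n" if k: "k \<le> d" for k
  proof
    assume "E k *\<^sub>v u k = 0\<^sub>v ?n"
    hence "E k *\<^sub>v u (k + i) = 0\<^sub>v ?n" if "k + i \<le> d" for i
      using that by (induction i) (auto intro: step k)
    hence "E k *\<^sub>v u j = 0\<^sub>v ?n" if "j \<le> d" for j
    proof (cases "j < k")
      case True thus ?thesis using below[OF k True] by simp
    next
      case False
      then obtain i where "j = k + i" using le_Suc_ex not_less by blast
      thus ?thesis using \<open>\<And>i. k + i \<le> d \<Longrightarrow> E k *\<^sub>v u (k + i) = 0\<^sub>v ?n\<close> that by simp
    qed
    thus False using E_nonzero_on_basis[OF b k] by blast
  qed
  show ?thesis unfolding flag_adapted_def using below diagonal by blast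
qed

lemma flag_member_lin_comb:
  assumes fa: "flag_adapted d E u" and b: "is_basis d u" and z: "z \<in> carrier_vec (Suc d)"
    and high: "\<And>l. j < l \<Longrightarrow> l \<le> d \<Longrightarrow> E l *\<^sub>v z = 0\<^sub>v (Suc d)"
  obtains c where "z = lin_comb d u c" "\<And>k. j < k \<Longrightarrow> k \<le> d \<Longrightarrow> c k = 0"
proof -
  obtain c where zc: "z = lin_comb d u c" using basis_spans[OF b z] by blast
  have "c k = 0" if "j < k" "k \<le> d" for k
    using flag_adapted_coeff_eq_zero[OF fa basis_carrier[OF b] E_carrier, of "Suc j" c k] high zc that
    by simp
  with zc that show ?thesis by blast
qed

lemma raising_E_mult_vec:
  assumes fa: "flag_adapted d E u" and u: "\<And>k. k \<le> d \<Longrightarrow> u k \<in> carrier_vec (Suc d)"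
    and N: "N \<in> carrier_mat (Suc d) (Suc d)"
    and up: "\<And>k. k < d \<Longrightarrow> \<exists>a. a \<noteq> 0 \<and> (N - \<phi> k \<cdot>\<^sub>m 1\<^sub>m (Suc d)) *\<^sub>v u k = a \<cdot>\<^sub>v u (Suc k)"
  shows raising_E_mult_vec_zero: "i \<le> d \<Longrightarrow> Suc k < i \<Longrightarrow> E i *\<^sub>v (N *\<^sub>v u k) = 0\<^sub>v (Suc d)"
    and raising_E_mult_vec_nonzero: "k < d \<Longrightarrow> E (Suc k) *\<^sub>v (N *\<^sub>v u k) \<noteq> 0\<^sub>v (Suc d)"
proof -
  let ?n = "Suc d"
  have below: "E l *\<^sub>v u k = 0\<^sub>v ?n" if "l \<le> d" "k < l" for l k
    using fa that unfolding flag_adapted_def by blast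
  have E_N_u: "\<exists>a. a \<noteq> 0 \<and> E i *\<^sub>v (N *\<^sub>v u k) = \<phi> k \<cdot>\<^sub>v (E i *\<^sub>v u k) + a \<cdot>\<^sub>v (E i *\<^sub>v u (Suc k))"
    if i: "i \<le> d" and k: "k < d" for i k
  proof -
    obtain a where a: "a \<noteq> 0" "(N - \<phi> k \<cdot>\<^sub>m 1\<^sub>m ?n) *\<^sub>v u k = a \<cdot>\<^sub>v u (Suc k)" using up[OF k] by blast
    have uk: "u k \<in> carrier_vec ?n" "u (Suc k) \<in> carrier_vec ?n" using u k by auto
    have "N *\<^sub>v u k = \<phi> k \<cdot>\<^sub>v u k + a \<cdot>\<^sub>v u (Suc k)"
      by (rule eq_smult_add_if_minus_eq[of _ ?n])
        (use a(2) uk mult_mat_vec_carrier[OF N uk(1)] in \<open>simp_all add: minus_smult_one_mult_vec[OF N]\<close>)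
    hence "E i *\<^sub>v (N *\<^sub>v u k) = \<phi> k \<cdot>\<^sub>v (E i *\<^sub>v u k) + a \<cdot>\<^sub>v (E i *\<^sub>v u (Suc k))"
      using mult_add_distrib_mat_vec[OF E_carrier[OF i], of "\<phi> k \<cdot>\<^sub>v u k" "a \<cdot>\<^sub>v u (Suc k)"]
        mult_mat_vec[OF E_carrier[OF i] uk(1)] mult_mat_vec[OF E_carrier[OF i] uk(2)] uk
      by simp
    thus ?thesis using a(1) by blast
  qed
  show "E i *\<^sub>v (N *\<^sub>v u k) = 0\<^sub>v ?n" if "i \<le> d" "Suc k < i"
    using E_N_u[of i k] below[of i k] below[of i "Suc k"] that by auto
  show "E (Suc k) *\<^sub>v (N *\<^sub>v u k) \<noteq> 0\<^sub>v ?n" if k: "k < d"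
  proof -
    obtain a where "a \<noteq> 0"
      and eq: "E (Suc k) *\<^sub>v (N *\<^sub>v u k) = \<phi> k \<cdot>\<^sub>v (E (Suc k) *\<^sub>v u k) + a \<cdot>\<^sub>v (E (Suc k) *\<^sub>v u (Suc k))"
      using E_N_u[of "Suc k" k] k by auto
    moreover have "E (Suc k) *\<^sub>v u (Suc k) \<noteq> 0\<^sub>v ?n"
      using fa k unfolding flag_adapted_def by auto
    ultimately show ?thesis
      using below[of "Suc k" k] k u[of "Suc k"] by (simp add: smult_vec_eq_zero_iff)
  qed
qed

lemma flag_adapted_upper_hessenberg:
  assumes fa: "flag_adapted d E u" and b: "is_basis d u" and N: "N \<in> carrier_mat (Suc d) (Suc d)"
    and zero: "\<And>i k. i \<le> d \<Longrightarrow> Suc k < i \<Longrightarrow> E i *\<^sub>v (N *\<^sub>v u k) = 0\<^sub>v (Suc d)"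
    and nonzero: "\<And>k. k < d \<Longrightarrow> E (Suc k) *\<^sub>v (N *\<^sub>v u k) \<noteq> 0\<^sub>v (Suc d)"
  shows "unreduced_upper_hessenberg d E N"
proof -
  let ?n = "Suc d"
  have u: "\<And>k. k \<le> d \<Longrightarrow> u k \<in> carrier_vec ?n" by (rule basis_carrier[OF b])
  have EN: "E i * N \<in> carrier_mat ?n ?n" if "i \<le> d" for i
    using E_carrier[OF that] N by simp
  have EN_u: "(E i * N) *\<^sub>v u k = 0\<^sub>v ?n" if "i \<le> d" "Suc k < i" for i k
    using zero[OF that] assoc_mult_mat_vec[OF E_carrier[OF that(1)] N u, of k] that by simp
  have EN_E: "(E i * N * E j) *\<^sub>v w = (E i * N) *\<^sub>v (E j *\<^sub>v w)"
    if "i \<le> d" "j \<le> d" "w \<in> carrier_vec ?n" for i j w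
    using assoc_mult_mat_vec[OF EN E_carrier] that by blast
  have zero_part: "E i * N * E j = 0\<^sub>m ?n ?n" if ij: "i \<le> d" "j \<le> d" "Suc j < i" for i j
  proof (rule mat_eqI_mult_vec)
    fix w :: "'a vec" assume w: "w \<in> carrier_vec ?n"
    obtain c where zc: "E j *\<^sub>v w = lin_comb d u c" and c0: "\<And>k. j < k \<Longrightarrow> k \<le> d \<Longrightarrow> c k = 0"
      by (rule flag_member_lin_comb[OF fa b, of "E j *\<^sub>v w" j]) (use ij w E_mult_E_vec in auto)
    have "(E i * N * E j) *\<^sub>v w = c j \<cdot>\<^sub>v ((E i * N) *\<^sub>v u j)"
      unfolding EN_E[OF ij(1,2) w] zc
      by (rule mult_vec_lin_comb_top_coeff[OF u EN[OF ij(1)] c0 ij(2)]) (use EN_u ij in auto)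
    thus "(E i * N * E j) *\<^sub>v w = 0\<^sub>m ?n ?n *\<^sub>v w" using EN_u ij w by simp
  qed (use mult_carrier_mat[OF EN[OF ij(1)] E_carrier[OF ij(2)]] in simp_all)
  have subdiagonal: "E (Suc j) * N * E j \<noteq> 0\<^sub>m ?n ?n" if j: "j < d" for j
  proof
    assume vanishes: "E (Suc j) * N * E j = 0\<^sub>m ?n ?n"
    let ?z = "E j *\<^sub>v u j"
    have z: "?z \<in> carrier_vec ?n" "?z \<noteq> 0\<^sub>v ?n" using fa j u unfolding flag_adapted_def by auto
    obtain c where zc: "?z = lin_comb d u c" and c0: "\<And>k. j < k \<Longrightarrow> k \<le> d \<Longrightarrow> c k = 0"
      by (rule flag_member_lin_comb[OF fa b z(1), of j]) (use j u E_mult_E_vec in auto)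
    have "?z = E j *\<^sub>v ?z" using E_mult_E_vec j u by simp
    also have "\<dots> = E j *\<^sub>v lin_comb d u c" using zc by (rule arg_cong)
    also have "\<dots> = c j \<cdot>\<^sub>v ?z"
      by (rule mult_vec_lin_comb_top_coeff[OF u E_carrier c0]) (use fa j in \<open>auto simp: flag_adapted_def\<close>)
    finally have "c j \<noteq> 0" using z by auto
    have "(E (Suc j) * N * E j) *\<^sub>v u j = (E (Suc j) * N) *\<^sub>v ?z" using EN_E j u by simp
    also have "\<dots> = (E (Suc j) * N) *\<^sub>v lin_comb d u c" using zc by (rule arg_cong)
    also have "\<dots> = c j \<cdot>\<^sub>v ((E (Suc j) * N) *\<^sub>v u j)"
      by (rule mult_vec_lin_comb_top_coeff[OF u EN c0]) (use j EN_u in auto)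
    finally have "(E (Suc j) * N * E j) *\<^sub>v u j = c j \<cdot>\<^sub>v ((E (Suc j) * N) *\<^sub>v u j)" .
    moreover have "(E (Suc j) * N) *\<^sub>v u j \<noteq> 0\<^sub>v ?n"
      using nonzero[OF j] assoc_mult_mat_vec[OF E_carrier N u, of "Suc j" j] j by simp
    moreover have "(E (Suc j) * N) *\<^sub>v u j \<in> carrier_vec ?n"
      using mult_mat_vec_carrier[OF EN u] j by simp
    moreover have "(E (Suc j) * N * E j) *\<^sub>v u j = 0\<^sub>v ?n" using vanishes u j by simp
    ultimately show False using \<open>c j \<noteq> 0\<close> smult_vec_eq_zero_iff by metis
  qed
  show ?thesis unfolding unreduced_upper_hessenberg_def using zero_part subdiagonal by blast
qed

lemma hessenberg_sequence_flag_adapted: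
  assumes hess: "unreduced_upper_hessenberg d E N" and N: "N \<in> carrier_mat (Suc d) (Suc d)"
    and v: "v \<in> carrier_vec (Suc d)" "v \<noteq> 0\<^sub>v (Suc d)" "E 0 *\<^sub>v v = v"
    and u0: "u 0 = v" and u_Suc: "\<And>k. u (Suc k) = (N - t k \<cdot>\<^sub>m 1\<^sub>m (Suc d)) *\<^sub>v u k"
  shows "flag_adapted d E u"
proof -
  let ?n = "Suc d"
  have N_shift: "N - t k \<cdot>\<^sub>m 1\<^sub>m ?n \<in> carrier_mat ?n ?n" for k
    using N by (intro minus_carrier_mat) auto
  have u: "u k \<in> carrier_vec ?n" for k
    using v by (induction k) (simp_all add: u0 u_Suc mult_mat_vec_carrier[OF N_shift])
  have E_u_Suc: "E l *\<^sub>v u (Suc k) = E l *\<^sub>v (N *\<^sub>v u k) - t k \<cdot>\<^sub>v (E l *\<^sub>v u k)" if l: "l \<le> d" for l k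
  proof -
    have "E l *\<^sub>v u (Suc k) = E l *\<^sub>v (N *\<^sub>v u k - t k \<cdot>\<^sub>v u k)"
      unfolding u_Suc minus_smult_one_mult_vec[OF N u] ..
    also have "\<dots> = E l *\<^sub>v (N *\<^sub>v u k) - E l *\<^sub>v (t k \<cdot>\<^sub>v u k)"
      by (rule mult_minus_distrib_mat_vec[OF E_carrier[OF l] mult_mat_vec_carrier[OF N u]]) (simp add: u)
    finally show ?thesis unfolding mult_mat_vec[OF E_carrier[OF l] u] .
  qed
  have hess0: "\<And>i j. i \<le> d \<Longrightarrow> j \<le> d \<Longrightarrow> Suc j < i \<Longrightarrow> E i * N * E j = 0\<^sub>m ?n ?n"
    and hess1: "\<And>j. j < d \<Longrightarrow> E (Suc j) * N * E j \<noteq> 0\<^sub>m ?n ?n"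
    using hess unfolding unreduced_upper_hessenberg_def by blast+
  have "(\<forall>l. k < l \<longrightarrow> l \<le> d \<longrightarrow> E l *\<^sub>v u k = 0\<^sub>v ?n) \<and> (k \<le> d \<longrightarrow> E k *\<^sub>v u k \<noteq> 0\<^sub>v ?n)" for k
  proof (induction k)
    case 0
    have "E l *\<^sub>v u 0 = 0\<^sub>v ?n" if "0 < l" "l \<le> d" for l
      using E_mult_E_vec[OF that(2) _ v(1), of 0] v(3) u0 that(1) by simp
    thus ?case using v u0 by auto
  next
    case (Suc k)
    hence low: "\<And>l. k < l \<Longrightarrow> l \<le> d \<Longrightarrow> E l *\<^sub>v u k = 0\<^sub>v ?n" by blast
    have "E l *\<^sub>v u (Suc k) = 0\<^sub>v ?n" if "Suc k < l" "l \<le> d" for l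
      using E_u_Suc[of l k] flag_step_zero[OF N hess0 u low] low[of l] that by simp
    moreover have "E (Suc k) *\<^sub>v u (Suc k) \<noteq> 0\<^sub>v ?n" if k: "Suc k \<le> d"
    proof -
      have Eu: "E k *\<^sub>v u k \<in> carrier_vec ?n" using k u by simp
      have "E (Suc k) *\<^sub>v u (Suc k) = (E (Suc k) * N) *\<^sub>v (E k *\<^sub>v u k)"
        using E_u_Suc[OF k, of k] flag_step_next[OF N hess0 u low k] low[of "Suc k"] k u
          assoc_mult_mat_vec[OF E_carrier[OF k] N Eu]
          mult_mat_vec_carrier[OF E_carrier[OF k] mult_mat_vec_carrier[OF N Eu]] by simp
      also have "\<dots> \<noteq> 0\<^sub>v ?n"
        by (rule rank_one_mult_nonzero[OF mult_carrier_mat[OF E_carrier[OF k] N]])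
          (use k hess1[of k] Suc.IH u in auto)
      finally show ?thesis .
    qed
    ultimately show ?case by auto
  qed
  thus ?thesis unfolding flag_adapted_def by blast
qed

lemma eigen_sequence_E_eq_zero:
  assumes u: "\<And>k. u k \<in> carrier_vec (Suc d)"
    and u_Suc: "\<And>k. u (Suc k) = (M - th k \<cdot>\<^sub>m 1\<^sub>m (Suc d)) *\<^sub>v u k"
  shows "l \<le> d \<Longrightarrow> l < k \<Longrightarrow> E l *\<^sub>v u k = 0\<^sub>v (Suc d)"
proof (induction k)
  case (Suc k)
  thus ?case using E_mult_shifted_M[OF Suc.prems(1) u, where t="th k"] u_Suc[of k] u[of k] E_carrier
    by (cases "l = k") auto
qed simp

lemma eigen_sequence_flag_adapted_rev:
  assumes b: "is_basis d u" and u: "\<And>k. u k \<in> carrier_vec (Suc d)"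
    and u_Suc: "\<And>k. u (Suc k) = (M - th k \<cdot>\<^sub>m 1\<^sub>m (Suc d)) *\<^sub>v u k"
  shows "flag_adapted d (\<lambda>l. E (d - l)) (\<lambda>k. u (d - k))"
proof (rule flag_adapted_revI)
  have E_u_Suc: "E l *\<^sub>v u (Suc k) = (th l - th k) \<cdot>\<^sub>v (E l *\<^sub>v u k)" if "l \<le> d" for l k
    using E_mult_shifted_M[OF that u] u_Suc by simp
  show zero: "E l *\<^sub>v u k = 0\<^sub>v (Suc d)" if "l < k" "k \<le> d" for l k
    using eigen_sequence_E_eq_zero[OF u u_Suc] that by simp
  have "E l *\<^sub>v u 0 \<noteq> 0\<^sub>v (Suc d)" if l: "l \<le> d" for l
  proof
    assume "E l *\<^sub>v u 0 = 0\<^sub>v (Suc d)"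
    hence vanish: "E l *\<^sub>v u k = 0\<^sub>v (Suc d)" for k by (induction k) (use E_u_Suc l in simp_all)
    obtain k where "E l *\<^sub>v u k \<noteq> 0\<^sub>v (Suc d)" using E_nonzero_on_basis[OF b l] by blast
    thus False using vanish by simp
  qed
  hence "E l *\<^sub>v u k \<noteq> 0\<^sub>v (Suc d)" if "l \<le> d" "k \<le> l" for l k
    using that by (induction k) (auto simp: E_u_Suc th_distinct smult_vec_eq_zero_iff u)
  thus "E k *\<^sub>v u k \<noteq> 0\<^sub>v (Suc d)" if "k \<le> d" for k using that by simp
qed

end

definition split_basis ::
  "nat \<Rightarrow> 'a::field mat \<Rightarrow> (nat \<Rightarrow> 'a) \<Rightarrow> 'a mat \<Rightarrow> (nat \<Rightarrow> 'a) \<Rightarrow> (nat \<Rightarrow> 'a vec) \<Rightarrow> bool" where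
  "split_basis d A th As ths u \<longleftrightarrow> is_basis d u \<and>
     (\<forall>i<d. \<exists>a. a \<noteq> 0 \<and> (A - th i \<cdot>\<^sub>m 1\<^sub>m (Suc d)) *\<^sub>v u i = a \<cdot>\<^sub>v u (Suc i)) \<and>
     (A - th d \<cdot>\<^sub>m 1\<^sub>m (Suc d)) *\<^sub>v u d = 0\<^sub>v (Suc d) \<and>
     (\<forall>i. 1 \<le> i \<and> i \<le> d \<longrightarrow> (\<exists>b. b \<noteq> 0 \<and> (As - ths i \<cdot>\<^sub>m 1\<^sub>m (Suc d)) *\<^sub>v u i = b \<cdot>\<^sub>v u (i - 1))) \<and>
     (As - ths 0 \<cdot>\<^sub>m 1\<^sub>m (Suc d)) *\<^sub>v u 0 = 0\<^sub>v (Suc d)"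

lemma split_basis_rev:
  assumes "split_basis d A th As ths u"
  shows "split_basis d As (\<lambda>k. ths (d - k)) A (\<lambda>k. th (d - k)) (\<lambda>k. u (d - k))"
  unfolding split_basis_def
proof (intro conjI allI impI)
  have b: "is_basis d u"
    and raise: "\<And>i. i < d \<Longrightarrow> \<exists>a. a \<noteq> 0 \<and> (A - th i \<cdot>\<^sub>m 1\<^sub>m (Suc d)) *\<^sub>v u i = a \<cdot>\<^sub>v u (Suc i)"
    and top: "(A - th d \<cdot>\<^sub>m 1\<^sub>m (Suc d)) *\<^sub>v u d = 0\<^sub>v (Suc d)"
    and lower: "\<And>i. 1 \<le> i \<Longrightarrow> i \<le> d \<Longrightarrow> \<exists>b. b \<noteq> 0 \<and> (As - ths i \<cdot>\<^sub>m 1\<^sub>m (Suc d)) *\<^sub>v u i = b \<cdot>\<^sub>v u (i - 1)"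
    and bottom: "(As - ths 0 \<cdot>\<^sub>m 1\<^sub>m (Suc d)) *\<^sub>v u 0 = 0\<^sub>v (Suc d)"
    using assms unfolding split_basis_def by auto
  show "is_basis d (\<lambda>k. u (d - k))" by (rule basis_rev[OF b])
  show "(As - ths (d - d) \<cdot>\<^sub>m 1\<^sub>m (Suc d)) *\<^sub>v u (d - d) = 0\<^sub>v (Suc d)" using bottom by simp
  show "(A - th (d - 0) \<cdot>\<^sub>m 1\<^sub>m (Suc d)) *\<^sub>v u (d - 0) = 0\<^sub>v (Suc d)" using top by simp
  fix i
  show "\<exists>a. a \<noteq> 0 \<and> (As - ths (d - i) \<cdot>\<^sub>m 1\<^sub>m (Suc d)) *\<^sub>v u (d - i) = a \<cdot>\<^sub>v u (d - Suc i)" if "i < d"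
    using lower[of "d - i"] that by (simp add: Suc_diff_Suc)
  show "\<exists>b. b \<noteq> 0 \<and> (A - th (d - i) \<cdot>\<^sub>m 1\<^sub>m (Suc d)) *\<^sub>v u (d - i) = b \<cdot>\<^sub>v u (d - (i - 1))"
    if "1 \<le> i \<and> i \<le> d"
  proof -
    have "Suc (d - i) = d - (i - 1)" using that by arith
    thus ?thesis using raise[of "d - i"] that by simp
  qed
qed

lemma basis_decomposition:
  assumes b: "is_basis d (u :: nat \<Rightarrow> 'a::field vec)" and U: "\<And>k. k \<le> d \<Longrightarrow> U k = vec_line (u k)"
  shows "decomposition d U"
  unfolding decomposition_def
proof (intro conjI allI impI ballI)
  have u: "\<And>k. k \<le> d \<Longrightarrow> u k \<in> carrier_vec (Suc d)" by (rule basis_carrier[OF b])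
  show "one_dim_subspace (Suc d) (U i)" if "i \<le> d" for i
    unfolding one_dim_subspace_def using u basis_nonzero[OF b] U that by blast
  show "\<exists>f. (\<forall>i\<le>d. f i \<in> U i) \<and> w = finsum_vec TYPE('a) (Suc d) f {..d}"
    if w: "w \<in> carrier_vec (Suc d)" for w
  proof -
    obtain c where "w = lin_comb d u c" using basis_spans[OF b w] by blast
    thus ?thesis using U finsum_vec_eq_lin_comb[OF u] by (intro exI[of _ "\<lambda>k. c k \<cdot>\<^sub>v u k"]) auto
  qed
  fix f i assume f: "(\<forall>i\<le>d. f i \<in> U i) \<and> finsum_vec TYPE('a) (Suc d) f {..d} = 0\<^sub>v (Suc d)"
    and i: "i \<le> d"
  have "\<forall>k. \<exists>c. k \<le> d \<longrightarrow> f k = c \<cdot>\<^sub>v u k" using f U by blast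
  from choice[OF this] obtain c where fc: "\<And>k. k \<le> d \<Longrightarrow> f k = c k \<cdot>\<^sub>v u k" by blast
  have "finsum_vec TYPE('a) (Suc d) f {..d} = finsum_vec TYPE('a) (Suc d) (\<lambda>k. c k \<cdot>\<^sub>v u k) {..d}"
    unfolding finsum_vec_def using fc u
    by (intro comm_monoid.finprod_cong'[OF comm_monoid_vec]) (auto simp: monoid_vec_def)
  hence "lin_comb d u c = 0\<^sub>v (Suc d)" using f finsum_vec_eq_lin_comb[OF u] by simp
  hence "c i = 0" using basis_coeff_eq_zero[OF b _ i] by blast
  thus "f i = 0\<^sub>v (Suc d)" using fc[OF i] u[OF i] by simp
qed

lemma decomposition_basis:
  assumes dec: "decomposition d (U :: nat \<Rightarrow> 'a::field vec set)"
  obtains u where "is_basis d u" "\<And>k. k \<le> d \<Longrightarrow> U k = vec_line (u k)"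
proof -
  have "\<forall>k. \<exists>x. k \<le> d \<longrightarrow> x \<in> carrier_vec (Suc d) \<and> x \<noteq> 0\<^sub>v (Suc d) \<and> U k = vec_line x"
    using dec unfolding decomposition_def one_dim_subspace_def by blast
  from choice[OF this] obtain u where u: "\<And>k. k \<le> d \<Longrightarrow> u k \<in> carrier_vec (Suc d)"
    and u0: "\<And>k. k \<le> d \<Longrightarrow> u k \<noteq> 0\<^sub>v (Suc d)" and U: "\<And>k. k \<le> d \<Longrightarrow> U k = vec_line (u k)"
    by blast
  have direct: "\<And>f. (\<forall>i\<le>d. f i \<in> U i) \<Longrightarrow> finsum_vec TYPE('a) (Suc d) f {..d} = 0\<^sub>v (Suc d) \<Longrightarrow>
      \<forall>i\<le>d. f i = 0\<^sub>v (Suc d)"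
    using dec unfolding decomposition_def by blast
  have "is_basis d u"
  proof (rule independent_is_basis[OF u])
    fix c k assume "lin_comb d u c = 0\<^sub>v (Suc d)" "k \<le> d"
    hence "c k \<cdot>\<^sub>v u k = 0\<^sub>v (Suc d)"
      using direct[of "\<lambda>k. c k \<cdot>\<^sub>v u k"] U finsum_vec_eq_lin_comb[OF u] by auto
    thus "c k = 0" using smult_vec_eq_zero_iff u u0 \<open>k \<le> d\<close> by blast
  qed
  from this U show ?thesis by (rule that)
qed

lemma split_decomposition_iff_split_basis_lines:
  assumes A: "A \<in> carrier_mat (Suc d) (Suc d)" and As: "As \<in> carrier_mat (Suc d) (Suc d)"
    and b: "is_basis d u" and U: "\<And>k. k \<le> d \<Longrightarrow> U k = vec_line (u k)"
  shows "split_decomposition d A th As ths U \<longleftrightarrow> split_basis d A th As ths u"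
proof -
  have u: "\<And>k. k \<le> d \<Longrightarrow> u k \<in> carrier_vec (Suc d)" by (rule basis_carrier[OF b])
  have shift: "B - t \<cdot>\<^sub>m 1\<^sub>m (Suc d) \<in> carrier_mat (Suc d) (Suc d)"
    if "B \<in> carrier_mat (Suc d) (Suc d)" for B t
    using that by (intro minus_carrier_mat) auto
  have line: "(\<lambda>x. (B - t \<cdot>\<^sub>m 1\<^sub>m (Suc d)) *\<^sub>v x) ` U i = U j \<longleftrightarrow>
      (\<exists>a. a \<noteq> 0 \<and> (B - t \<cdot>\<^sub>m 1\<^sub>m (Suc d)) *\<^sub>v u i = a \<cdot>\<^sub>v u j)"
    if "B \<in> carrier_mat (Suc d) (Suc d)" "i \<le> d" "j \<le> d" for B t i j
    using image_vec_line_eq_vec_line_iff[OF shift[OF that(1)] u u basis_nonzero[OF b]] U that by simp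
  have zero: "(\<lambda>x. (B - t \<cdot>\<^sub>m 1\<^sub>m (Suc d)) *\<^sub>v x) ` U i = {0\<^sub>v (Suc d)} \<longleftrightarrow>
      (B - t \<cdot>\<^sub>m 1\<^sub>m (Suc d)) *\<^sub>v u i = 0\<^sub>v (Suc d)"
    if "B \<in> carrier_mat (Suc d) (Suc d)" "i \<le> d" for B t i
    using image_vec_line_eq_zero_iff[OF shift[OF that(1)] u] U that by simp
  have raise: "(\<forall>i<d. (\<lambda>x. (A - th i \<cdot>\<^sub>m 1\<^sub>m (Suc d)) *\<^sub>v x) ` U i = U (Suc i)) \<longleftrightarrow>
      (\<forall>i<d. \<exists>a. a \<noteq> 0 \<and> (A - th i \<cdot>\<^sub>m 1\<^sub>m (Suc d)) *\<^sub>v u i = a \<cdot>\<^sub>v u (Suc i))"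
    using line[OF A] by simp
  have lower: "(\<forall>i. 1 \<le> i \<and> i \<le> d \<longrightarrow> (\<lambda>x. (As - ths i \<cdot>\<^sub>m 1\<^sub>m (Suc d)) *\<^sub>v x) ` U i = U (i - 1)) \<longleftrightarrow>
      (\<forall>i. 1 \<le> i \<and> i \<le> d \<longrightarrow> (\<exists>b. b \<noteq> 0 \<and> (As - ths i \<cdot>\<^sub>m 1\<^sub>m (Suc d)) *\<^sub>v u i = b \<cdot>\<^sub>v u (i - 1)))"
  proof -
    have "(\<lambda>x. (As - ths i \<cdot>\<^sub>m 1\<^sub>m (Suc d)) *\<^sub>v x) ` U i = U (i - 1) \<longleftrightarrow>
        (\<exists>b. b \<noteq> 0 \<and> (As - ths i \<cdot>\<^sub>m 1\<^sub>m (Suc d)) *\<^sub>v u i = b \<cdot>\<^sub>v u (i - 1))"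
      if "1 \<le> i \<and> i \<le> d" for i
    proof -
      have "i \<le> d" "i - 1 \<le> d" using that by auto
      thus ?thesis using line[OF As] by simp
    qed
    thus ?thesis by blast
  qed
  show ?thesis
    unfolding split_decomposition_def split_basis_def raise lower zero[OF A order.refl] zero[OF As le0]
    using basis_decomposition[OF b U] b by simp
qed

lemma split_decomposition_iff_split_basis:
  assumes A: "A \<in> carrier_mat (Suc d) (Suc d)" and As: "As \<in> carrier_mat (Suc d) (Suc d)"
  shows "(\<exists>U. split_decomposition d A th As ths U) \<longleftrightarrow> (\<exists>u. split_basis d A th As ths u)"
proof
  assume "\<exists>U. split_decomposition d A th As ths U"
  then obtain U where sd: "split_decomposition d A th As ths U" by blast
  hence "decomposition d U" unfolding split_decomposition_def by simp
  then obtain u where b: "is_basis d u" and U: "\<And>k. k \<le> d \<Longrightarrow> U k = vec_line (u k)"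
    using decomposition_basis by blast
  have "split_basis d A th As ths u"
    using split_decomposition_iff_split_basis_lines[OF A As b U] sd by simp
  thus "\<exists>u. split_basis d A th As ths u" by blast
next
  assume "\<exists>u. split_basis d A th As ths u"
  then obtain u where sb: "split_basis d A th As ths u" by blast
  hence b: "is_basis d u" unfolding split_basis_def by simp
  have "split_decomposition d A th As ths (\<lambda>k. vec_line (u k))"
    using split_decomposition_iff_split_basis_lines[OF A As b, of "\<lambda>k. vec_line (u k)"] sb by simp
  thus "\<exists>U. split_decomposition d A th As ths U" by blast
qed

lemma (in primitive_idempotents) split_basis_upper_hessenberg:
  assumes sb: "split_basis d N \<phi> M th u" and N: "N \<in> carrier_mat (Suc d) (Suc d)"
  shows "unreduced_upper_hessenberg d E N"
proof -
  have b: "is_basis d u" using sb unfolding split_basis_def by blast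
  have fa: "flag_adapted d E u"
    by (rule lowering_flag_adapted[OF b]) (use sb in \<open>auto simp: split_basis_def\<close>)
  have up: "\<And>k. k < d \<Longrightarrow> \<exists>a. a \<noteq> 0 \<and> (N - \<phi> k \<cdot>\<^sub>m 1\<^sub>m (Suc d)) *\<^sub>v u k = a \<cdot>\<^sub>v u (Suc k)"
    using sb unfolding split_basis_def by blast
  show ?thesis
    by (rule flag_adapted_upper_hessenberg[OF fa b N raising_E_mult_vec_zero[OF fa basis_carrier[OF b] N up]
          raising_E_mult_vec_nonzero[OF fa basis_carrier[OF b] N up]])
qed

locale primitive_idempotent_pair =
  E: primitive_idempotents d A th E + F: primitive_idempotents d As ths F
  for d :: nat and A :: "'a::field mat" and th E and As :: "'a mat" and ths F
begin

lemma split_basis_hessenberg: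
  assumes sb: "split_basis d A th As ths u"
  shows "unreduced_upper_hessenberg d F A \<and> unreduced_lower_hessenberg d E As"
proof
  show "unreduced_upper_hessenberg d F A"
    by (rule F.split_basis_upper_hessenberg[OF sb E.M_carrier])
  interpret R: primitive_idempotents d A "\<lambda>k. th (d - k)" "\<lambda>k. E (d - k)" by (rule E.primitive_idempotents_rev)
  have "unreduced_upper_hessenberg d (\<lambda>k. E (d - k)) As"
    by (rule R.split_basis_upper_hessenberg[OF split_basis_rev[OF sb] F.M_carrier])
  thus "unreduced_lower_hessenberg d E As" by (simp add: unreduced_upper_hessenberg_rev_iff)
qed

lemma lowering_from_flags:
  assumes lower: "unreduced_lower_hessenberg d E As"
    and b: "is_basis d u" and faF: "flag_adapted d F u"
    and faE: "flag_adapted d (\<lambda>l. E (d - l)) (\<lambda>k. u (d - k))"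
    and i: "1 \<le> i" "i \<le> d"
  shows "\<exists>b. b \<noteq> 0 \<and> (As - ths i \<cdot>\<^sub>m 1\<^sub>m (Suc d)) *\<^sub>v u i = b \<cdot>\<^sub>v u (i - 1)"
proof -
  let ?n = "Suc d"
  have u: "\<And>k. k \<le> d \<Longrightarrow> u k \<in> carrier_vec ?n" by (rule basis_carrier[OF b])
  have lower0: "\<And>i j. i \<le> d \<Longrightarrow> j \<le> d \<Longrightarrow> Suc i < j \<Longrightarrow> E i * As * E j = 0\<^sub>m ?n ?n"
    and lower1: "\<And>i. i < d \<Longrightarrow> E i * As * E (Suc i) \<noteq> 0\<^sub>m ?n ?n"
    using lower unfolding unreduced_lower_hessenberg_def by blast+
  have E_u: "\<And>l. l < i \<Longrightarrow> E l *\<^sub>v u i = 0\<^sub>v ?n" using flag_adapted_revD(1)[OF faE] i by blast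
  define w where "w = (As - ths i \<cdot>\<^sub>m 1\<^sub>m ?n) *\<^sub>v u i"
  have w: "w \<in> carrier_vec ?n" unfolding w_def using F.M_carrier u i
    by (intro mult_mat_vec_carrier[of _ ?n ?n]) auto
  have E_w: "E l *\<^sub>v w = E l *\<^sub>v (As *\<^sub>v u i) - ths i \<cdot>\<^sub>v (E l *\<^sub>v u i)" if "l \<le> d" for l
    unfolding w_def minus_smult_one_mult_vec[OF F.M_carrier u[OF i(2)]]
    using E.E_carrier[OF that] F.M_carrier u[OF i(2)]
    by (simp add: mult_minus_distrib_mat_vec mult_mat_vec)
  have F_high: "F l *\<^sub>v w = 0\<^sub>v ?n" if "i \<le> l" "l \<le> d" for l
    using F.E_mult_shifted_M[OF that(2) u[OF i(2)], of "ths i"] faF that u[OF i(2)]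
    unfolding w_def flag_adapted_def by (cases "l = i") auto
  have E_low: "E l *\<^sub>v w = 0\<^sub>v ?n" if "Suc l < i" for l
    using E_w[of l] E.flag_step_rev_zero[OF F.M_carrier lower0 u E_u i(2)] E_u[of l] that i by simp
  obtain c where wc: "w = c \<cdot>\<^sub>v u (i - 1)"
    using flag_intersection_line[OF b faF faE F.E_carrier E.E_carrier w F_high E_low i] by blast
  \<comment> \<open>the \<open>E\<^sub>i\<^sub>-\<^sub>1\<close>-component of \<open>w\<close> is \<open>E\<^sub>i\<^sub>-\<^sub>1 A\<^sup>* E\<^sub>i u\<^sub>i \<noteq> 0\<close>\<close>
  have "E (i - 1) *\<^sub>v w = (E (i - 1) * As) *\<^sub>v (E i *\<^sub>v u i)"
    using E_w[of "i - 1"] E.flag_step_rev_next[OF F.M_carrier lower0 u E_u i(2) i(1)] E_u[of "i - 1"] i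
      assoc_mult_mat_vec[OF E.E_carrier F.M_carrier E.E_mult_vec_carrier[OF i(2) u[OF i(2)]], of "i - 1"]
      mult_mat_vec_carrier[OF E.E_carrier[of "i - 1"] mult_mat_vec_carrier[OF F.M_carrier u[OF i(2)]]]
    by simp
  also have "\<dots> \<noteq> 0\<^sub>v ?n"
    by (rule E.rank_one_mult_nonzero[OF mult_carrier_mat[OF E.E_carrier F.M_carrier] i(2)])
      (use lower1[of "i - 1"] i u flag_adapted_revD(2)[OF faE] in auto)
  moreover have "i - 1 \<le> d" using i by simp
  ultimately have "c \<noteq> 0" using wc E.E_carrier[of "i - 1"] u[of "i - 1"] by auto
  thus ?thesis using wc unfolding w_def by blast
qed

lemma hessenberg_split_basis:
  assumes upper: "unreduced_upper_hessenberg d F A" and lower: "unreduced_lower_hessenberg d E As"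
  shows "\<exists>u. split_basis d A th As ths u"
proof -
  let ?n = "Suc d"
  obtain v where v: "v \<in> carrier_vec ?n" "v \<noteq> 0\<^sub>v ?n" "F 0 *\<^sub>v v = v"
    using F.rank_one_E[of 0] by auto
  define u where "u = rec_nat v (\<lambda>k x. (A - th k \<cdot>\<^sub>m 1\<^sub>m ?n) *\<^sub>v x)"
  have u0: "u 0 = v" and u_Suc: "\<And>k. u (Suc k) = (A - th k \<cdot>\<^sub>m 1\<^sub>m ?n) *\<^sub>v u k"
    unfolding u_def by simp_all
  have A_shift: "A - th k \<cdot>\<^sub>m 1\<^sub>m ?n \<in> carrier_mat ?n ?n" for k
    using E.M_carrier by (intro minus_carrier_mat) auto
  have u: "u k \<in> carrier_vec ?n" for k
    using v by (induction k) (simp_all add: u0 u_Suc mult_mat_vec_carrier[OF A_shift])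
  have faF: "flag_adapted d F u"
    by (rule F.hessenberg_sequence_flag_adapted[OF upper E.M_carrier v u0 u_Suc])
  have b: "is_basis d u" by (rule flag_adapted_is_basis[OF faF u F.E_carrier])
  have faE: "flag_adapted d (\<lambda>l. E (d - l)) (\<lambda>k. u (d - k))"
    by (rule E.eigen_sequence_flag_adapted_rev[OF b u u_Suc])
  have top: "(A - th d \<cdot>\<^sub>m 1\<^sub>m ?n) *\<^sub>v u d = 0\<^sub>v ?n"
    unfolding u_Suc[symmetric] by (rule E.eq_zero_if_E_eq_zero[OF u E.eigen_sequence_E_eq_zero[OF u u_Suc]]) auto
  have bottom: "(As - ths 0 \<cdot>\<^sub>m 1\<^sub>m ?n) *\<^sub>v u 0 = 0\<^sub>v ?n"
  proof -
    have "As *\<^sub>v v = ths 0 \<cdot>\<^sub>v v"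
      using v F.M_mult_E[of 0] assoc_mult_mat_vec[OF F.M_carrier F.E_carrier v(1), of 0]
        smult_mat_mult_vec[OF F.E_carrier v(1), of 0] by simp
    thus ?thesis using v(1) F.M_carrier by (auto intro!: eq_vecI simp: u0 minus_smult_one_mult_vec)
  qed
  have "split_basis d A th As ths u"
    unfolding split_basis_def
    using b top bottom lowering_from_flags[OF lower b faF faE] u_Suc[symmetric]
    by (auto intro: exI[of _ 1])
  thus ?thesis by blast
qed

lemma split_basis_iff_hessenberg:
  "(\<exists>u. split_basis d A th As ths u) \<longleftrightarrow>
     unreduced_upper_hessenberg d F A \<and> unreduced_lower_hessenberg d E As"
  using split_basis_hessenberg hessenberg_split_basis by blast

end

lemma unreduced_upper_hessenberg_iff:
  "unreduced_upper_hessenberg d G N \<longleftrightarrow>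
    (\<forall>i\<le>d. \<forall>j\<le>d. (int i - int j > 1 \<longrightarrow> G i * N * G j = 0\<^sub>m (Suc d) (Suc d)) \<and>
        (int i - int j = 1 \<longrightarrow> G i * N * G j \<noteq> 0\<^sub>m (Suc d) (Suc d)))"
  unfolding unreduced_upper_hessenberg_def
proof (intro iffI conjI allI impI; (elim conjE)?)
  fix i j assume "\<forall>j<d. G (Suc j) * N * G j \<noteq> 0\<^sub>m (Suc d) (Suc d)" "i \<le> d" "int i - int j = 1"
  moreover from this have "i = Suc j" "j < d" by auto
  ultimately show "G i * N * G j \<noteq> 0\<^sub>m (Suc d) (Suc d)" by simp
next
  fix j assume "\<forall>i\<le>d. \<forall>j\<le>d. (int i - int j > 1 \<longrightarrow> G i * N * G j = 0\<^sub>m (Suc d) (Suc d)) \<and>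
        (int i - int j = 1 \<longrightarrow> G i * N * G j \<noteq> 0\<^sub>m (Suc d) (Suc d))" "j < d"
  thus "G (Suc j) * N * G j \<noteq> 0\<^sub>m (Suc d) (Suc d)" by auto
qed auto

lemma unreduced_lower_hessenberg_iff:
  "unreduced_lower_hessenberg d G N \<longleftrightarrow>
    (\<forall>i\<le>d. \<forall>j\<le>d. (int j - int i > 1 \<longrightarrow> G i * N * G j = 0\<^sub>m (Suc d) (Suc d)) \<and>
        (int j - int i = 1 \<longrightarrow> G i * N * G j \<noteq> 0\<^sub>m (Suc d) (Suc d)))"
  unfolding unreduced_lower_hessenberg_def
proof (intro iffI conjI allI impI; (elim conjE)?)
  fix i j assume "\<forall>i<d. G i * N * G (Suc i) \<noteq> 0\<^sub>m (Suc d) (Suc d)" "j \<le> d" "int j - int i = 1"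
  moreover from this have "j = Suc i" "i < d" by auto
  ultimately show "G i * N * G j \<noteq> 0\<^sub>m (Suc d) (Suc d)" by simp
next
  fix i assume "\<forall>i\<le>d. \<forall>j\<le>d. (int j - int i > 1 \<longrightarrow> G i * N * G j = 0\<^sub>m (Suc d) (Suc d)) \<and>
        (int j - int i = 1 \<longrightarrow> G i * N * G j \<noteq> 0\<^sub>m (Suc d) (Suc d))" "i < d"
  thus "G i * N * G (Suc i) \<noteq> 0\<^sub>m (Suc d) (Suc d)" by auto
qed auto

theorem theorem4p1:
  fixes d :: nat and A As :: "'a::field mat" and th ths :: "nat \<Rightarrow> 'a"
  assumes "eigenvalue_ordering d A th"
    and "eigenvalue_ordering d As ths"
  defines "E \<equiv> prim_idem d A th" and "Es \<equiv> prim_idem d As ths"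
  shows "(\<exists>U. split_decomposition d A th As ths U) \<longleftrightarrow>
    ((\<forall>i\<le>d. \<forall>j\<le>d.
        (int i - int j > 1 \<longrightarrow> Es i * A * Es j = 0\<^sub>m (Suc d) (Suc d)) \<and>
        (int i - int j = 1 \<longrightarrow> Es i * A * Es j \<noteq> 0\<^sub>m (Suc d) (Suc d))) \<and>
     (\<forall>i\<le>d. \<forall>j\<le>d.
        (int j - int i > 1 \<longrightarrow> E i * As * E j = 0\<^sub>m (Suc d) (Suc d)) \<and>
        (int j - int i = 1 \<longrightarrow> E i * As * E j \<noteq> 0\<^sub>m (Suc d) (Suc d))))"
proof -
  interpret primitive_idempotent_pair d A th E As ths Es
    unfolding primitive_idempotent_pair_def E_def Es_def
    using prim_idem_primitive_idempotents assms(1,2) by blast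
  have "(\<exists>U. split_decomposition d A th As ths U) \<longleftrightarrow> (\<exists>u. split_basis d A th As ths u)"
    by (rule split_decomposition_iff_split_basis[OF E.M_carrier F.M_carrier])
  also have "\<dots> \<longleftrightarrow> unreduced_upper_hessenberg d Es A \<and> unreduced_lower_hessenberg d E As"
    by (rule split_basis_iff_hessenberg)
  finally show ?thesis
    unfolding unreduced_upper_hessenberg_iff unreduced_lower_hessenberg_iff .
qed

end
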